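(* Let $\Gamma$ be a totally ordered group, let $\mathcal{G}$ be a $\Gamma$-graded ample Hausdorff groupoid with continuous cocycle $c:\mathcal{G}\to\Gamma$, and let $R$ be a field. If the Steinberg algebra $A_R(\mathcal{G})$ is a left SF-ring, then the unit space $\mathcal{G}^{(0)}$ is $\Gamma$-aperiodic, i.e. for every $u\in\mathcal{G}^{(0)}$ one has $c(x)=\varepsilon$ for all $x\in\mathcal{G}_u^u$.
   Context: A topological groupoid $\mathcal{G}$ has domain and range maps $d(x)=x^{-1}x$, $r(x)=xx^{-1}$ and unit space $\mathcal{G}^{(0)}=d(\mathcal{G})$. It is étale if $d$ is a local homeomorphism; an open bisection is an open $U\subseteq\mathcal{G}$ with $d|_U,r|_U$ homeomorphisms onto open subsets of $\mathcal{G}^{(0)}$; $\mathcal{G}$ is ample if it is étale with a basis of compact open bisections. For a discrete group $\Gamma$ with identity $\varepsilon$, a $\Gamma$-grading of $\mathcal{G}$ is a continuous map $c:\mathcal{G}\to\Gamma$ with $c(gh)=c(g)c(h)$ for composable $g,h$. The isotropy group at $u$ is $\mathcal{G}_u^u=\{\gamma: d(\gamma)=r(\gamma)=u\}$; $u$ is $\Gamma$-aperiodic if $\mathcal{G}_u^u\subseteq c^{-1}(\varepsilon)$. The Steinberg algebra $A_R(\mathcal{G})$ is the $R$-algebra of compactly supported locally constant functions $\mathcal{G}\to R$ with pointwise addition and convolution $(f*g)(\gamma)=\sum_{\gamma=\alpha\beta}f(\alpha)g(\beta)$; it is a ring with local units. For a ring $A$ with local units, $A$ is a left SF-ring if every simple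 unital left $A$-module $N$ (unital meaning $AN=N$) is flat, i.e. $-\otimes_A N$ is exact on the category of unital right $A$-modules. *)

theory Defs
  imports "HOL-Analysis.Analysis"
begin

text \<open>A (possibly non-abelian) group written additively (class group_add, identity 0),
  equipped with a total order invariant under left and right translation.\<close>
definition totally_ordered_group :: "'c::{group_add,linorder} itself \<Rightarrow> bool" where
  "totally_ordered_group _ \<equiv>
     (\<forall>a b x :: 'c. a \<le> b \<longrightarrow> x + a \<le> x + b \<and> a + x \<le> b + x)"

text \<open>A groupoid with arrow set topspace T, composable pairs G2, multiplication gmul
  and inverse ginv (Renault's axioms).\<close>
definition groupoid :: "'g topology \<Rightarrow> ('g \<times> 'g) set \<Rightarrow> ('g \<Rightarrow> 'g \<Rightarrow> 'g) \<Rightarrow> ('g \<Rightarrow> 'g) \<Rightarrow> bool" where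
  "groupoid T G2 gmul ginv \<equiv>
     G2 \<subseteq> topspace T \<times> topspace T \<and>
     (\<forall>x\<in>topspace T. ginv x \<in> topspace T \<and> ginv (ginv x) = x) \<and>
     (\<forall>(x,y)\<in>G2. gmul x y \<in> topspace T) \<and>
     (\<forall>x y z. (x,y) \<in> G2 \<and> (y,z) \<in> G2 \<longrightarrow>
        (gmul x y, z) \<in> G2 \<and> (x, gmul y z) \<in> G2 \<and> gmul (gmul x y) z = gmul x (gmul y z)) \<and>
     (\<forall>x\<in>topspace T. (ginv x, x) \<in> G2) \<and>
     (\<forall>(x,y)\<in>G2. gmul (ginv x) (gmul x y) = y \<and> gmul (gmul x y) (ginv y) = x)"

definition gdom :: "('g \<Rightarrow> 'g \<Rightarrow> 'g) \<Rightarrow> ('g \<Rightarrow> 'g) \<Rightarrow> 'g \<Rightarrow> 'g" where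
  "gdom gmul ginv x = gmul (ginv x) x"

definition gran :: "('g \<Rightarrow> 'g \<Rightarrow> 'g) \<Rightarrow> ('g \<Rightarrow> 'g) \<Rightarrow> 'g \<Rightarrow> 'g" where
  "gran gmul ginv x = gmul x (ginv x)"

definition unit_space :: "'g topology \<Rightarrow> ('g \<Rightarrow> 'g \<Rightarrow> 'g) \<Rightarrow> ('g \<Rightarrow> 'g) \<Rightarrow> 'g set" where
  "unit_space T gmul ginv = gdom gmul ginv ` topspace T"

definition isotropy :: "'g topology \<Rightarrow> ('g \<Rightarrow> 'g \<Rightarrow> 'g) \<Rightarrow> ('g \<Rightarrow> 'g) \<Rightarrow> 'g \<Rightarrow> 'g set" where
  "isotropy T gmul ginv u = {x \<in> topspace T. gdom gmul ginv x = u \<and> gran gmul ginv x = u}"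

definition topological_groupoid :: "'g topology \<Rightarrow> ('g \<times> 'g) set \<Rightarrow> ('g \<Rightarrow> 'g \<Rightarrow> 'g) \<Rightarrow> ('g \<Rightarrow> 'g) \<Rightarrow> bool" where
  "topological_groupoid T G2 gmul ginv \<equiv>
     groupoid T G2 gmul ginv \<and>
     continuous_map (subtopology (prod_topology T T) G2) T (\<lambda>(x,y). gmul x y) \<and>
     continuous_map T T ginv"

definition etale_groupoid :: "'g topology \<Rightarrow> ('g \<times> 'g) set \<Rightarrow> ('g \<Rightarrow> 'g \<Rightarrow> 'g) \<Rightarrow> ('g \<Rightarrow> 'g) \<Rightarrow> bool" where
  "etale_groupoid T G2 gmul ginv \<equiv>
     topological_groupoid T G2 gmul ginv \<and>
     (\<forall>x\<in>topspace T. \<exists>U. openin T U \<and> x \<in> U \<and>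
        openin (subtopology T (unit_space T gmul ginv)) (gdom gmul ginv ` U) \<and>
        homeomorphic_map (subtopology T U) (subtopology T (gdom gmul ginv ` U)) (gdom gmul ginv))"

definition open_bisection :: "'g topology \<Rightarrow> ('g \<Rightarrow> 'g \<Rightarrow> 'g) \<Rightarrow> ('g \<Rightarrow> 'g) \<Rightarrow> 'g set \<Rightarrow> bool" where
  "open_bisection T gmul ginv U \<equiv>
     openin T U \<and>
     openin (subtopology T (unit_space T gmul ginv)) (gdom gmul ginv ` U) \<and>
     homeomorphic_map (subtopology T U) (subtopology T (gdom gmul ginv ` U)) (gdom gmul ginv) \<and>
     openin (subtopology T (unit_space T gmul ginv)) (gran gmul ginv ` U) \<and>
     homeomorphic_map (subtopology T U) (subtopology T (gran gmul ginv ` U)) (gran gmul ginv)"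

definition ample_groupoid :: "'g topology \<Rightarrow> ('g \<times> 'g) set \<Rightarrow> ('g \<Rightarrow> 'g \<Rightarrow> 'g) \<Rightarrow> ('g \<Rightarrow> 'g) \<Rightarrow> bool" where
  "ample_groupoid T G2 gmul ginv \<equiv>
     etale_groupoid T G2 gmul ginv \<and>
     (\<forall>W x. openin T W \<and> x \<in> W \<longrightarrow>
        (\<exists>B. open_bisection T gmul ginv B \<and> compactin T B \<and> x \<in> B \<and> B \<subseteq> W))"

definition grading :: "'g topology \<Rightarrow> ('g \<times> 'g) set \<Rightarrow> ('g \<Rightarrow> 'g \<Rightarrow> 'g) \<Rightarrow> ('g \<Rightarrow> 'c::group_add) \<Rightarrow> bool" where
  "grading T G2 gmul c \<equiv>
     continuous_map T (discrete_topology UNIV) c \<and>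
     (\<forall>(x,y)\<in>G2. c (gmul x y) = c x + c y)"

record 'a rng =
  rcarr :: "'a set"
  radd :: "'a \<Rightarrow> 'a \<Rightarrow> 'a"
  rmul :: "'a \<Rightarrow> 'a \<Rightarrow> 'a"

record 'm abgrp =
  gcarr :: "'m set"
  gadd :: "'m \<Rightarrow> 'm \<Rightarrow> 'm"
  gzero :: 'm

record ('m, 'a) lmodule = "'m abgrp" +
  lact :: "'a \<Rightarrow> 'm \<Rightarrow> 'm"

record ('m, 'a) rmodule = "'m abgrp" +
  ract :: "'m \<Rightarrow> 'a \<Rightarrow> 'm"

definition abgroup :: "('m, 'b) abgrp_scheme \<Rightarrow> bool" where
  "abgroup M \<equiv>
     gzero M \<in> gcarr M \<and>
     (\<forall>x\<in>gcarr M. \<forall>y\<in>gcarr M. gadd M x y \<in> gcarr M) \<and>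
     (\<forall>x\<in>gcarr M. \<forall>y\<in>gcarr M. \<forall>z\<in>gcarr M. gadd M (gadd M x y) z = gadd M x (gadd M y z)) \<and>
     (\<forall>x\<in>gcarr M. \<forall>y\<in>gcarr M. gadd M x y = gadd M y x) \<and>
     (\<forall>x\<in>gcarr M. gadd M (gzero M) x = x) \<and>
     (\<forall>x\<in>gcarr M. \<exists>y\<in>gcarr M. gadd M x y = gzero M)"

definition left_module :: "'a rng \<Rightarrow> ('m, 'a) lmodule \<Rightarrow> bool" where
  "left_module A N \<equiv> abgroup N \<and>
     (\<forall>a\<in>rcarr A. \<forall>n\<in>gcarr N. lact N a n \<in> gcarr N) \<and>
     (\<forall>a\<in>rcarr A. \<forall>b\<in>rcarr A. \<forall>n\<in>gcarr N.
        lact N (radd A a b) n = gadd N (lact N a n) (lact N b n)) \<and>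
     (\<forall>a\<in>rcarr A. \<forall>n\<in>gcarr N. \<forall>n'\<in>gcarr N.
        lact N a (gadd N n n') = gadd N (lact N a n) (lact N a n')) \<and>
     (\<forall>a\<in>rcarr A. \<forall>b\<in>rcarr A. \<forall>n\<in>gcarr N. lact N (rmul A a b) n = lact N a (lact N b n))"

definition right_module :: "'a rng \<Rightarrow> ('m, 'a) rmodule \<Rightarrow> bool" where
  "right_module A M \<equiv> abgroup M \<and>
     (\<forall>a\<in>rcarr A. \<forall>m\<in>gcarr M. ract M m a \<in> gcarr M) \<and>
     (\<forall>a\<in>rcarr A. \<forall>b\<in>rcarr A. \<forall>m\<in>gcarr M.
        ract M m (radd A a b) = gadd M (ract M m a) (ract M m b)) \<and>
     (\<forall>a\<in>rcarr A. \<forall>m\<in>gcarr M. \<forall>m'\<in>gcarr M.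
        ract M (gadd M m m') a = gadd M (ract M m a) (ract M m' a)) \<and>
     (\<forall>a\<in>rcarr A. \<forall>b\<in>rcarr A. \<forall>m\<in>gcarr M. ract M m (rmul A a b) = ract M (ract M m a) b)"

text \<open>Unital: AN = N, i.e. every element is a finite sum of products a n.\<close>
definition unital_left_module :: "'a rng \<Rightarrow> ('m, 'a) lmodule \<Rightarrow> bool" where
  "unital_left_module A N \<equiv> left_module A N \<and>
     (\<forall>n\<in>gcarr N. \<exists>ps. set ps \<subseteq> rcarr A \<times> gcarr N \<and>
        n = foldr (\<lambda>(a, m) acc. gadd N (lact N a m) acc) ps (gzero N))"

definition unital_right_module :: "'a rng \<Rightarrow> ('m, 'a) rmodule \<Rightarrow> bool" where
  "unital_right_module A M \<equiv> right_module A M \<and>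
     (\<forall>m\<in>gcarr M. \<exists>ps. set ps \<subseteq> gcarr M \<times> rcarr A \<and>
        m = foldr (\<lambda>(m', a) acc. gadd M (ract M m' a) acc) ps (gzero M))"

definition left_submodule :: "'a rng \<Rightarrow> ('m, 'a) lmodule \<Rightarrow> 'm set \<Rightarrow> bool" where
  "left_submodule A N S \<equiv> S \<subseteq> gcarr N \<and> gzero N \<in> S \<and>
     (\<forall>x\<in>S. \<forall>y\<in>S. gadd N x y \<in> S) \<and>
     (\<forall>x\<in>S. \<forall>y\<in>gcarr N. gadd N x y = gzero N \<longrightarrow> y \<in> S) \<and>
     (\<forall>a\<in>rcarr A. \<forall>x\<in>S. lact N a x \<in> S)"

definition simple_left_module :: "'a rng \<Rightarrow> ('m, 'a) lmodule \<Rightarrow> bool" where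
  "simple_left_module A N \<equiv> left_module A N \<and> gcarr N \<noteq> {gzero N} \<and>
     (\<forall>S. left_submodule A N S \<longrightarrow> S = {gzero N} \<or> S = gcarr N)"

definition right_hom :: "'a rng \<Rightarrow> ('m, 'a) rmodule \<Rightarrow> ('m, 'a) rmodule \<Rightarrow> ('m \<Rightarrow> 'm) \<Rightarrow> bool" where
  "right_hom A M M' f \<equiv>
     (\<forall>m\<in>gcarr M. f m \<in> gcarr M') \<and>
     (\<forall>m\<in>gcarr M. \<forall>m'\<in>gcarr M. f (gadd M m m') = gadd M' (f m) (f m')) \<and>
     (\<forall>m\<in>gcarr M. \<forall>a\<in>rcarr A. f (ract M m a) = ract M' (f m) a)"

section \<open>Tensor products M \<otimes>_A N, as free abelian group modulo relations\<close>

text \<open>Free abelian group on X: finitely supported integer functions supported in X.\<close>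
definition free_on :: "'x set \<Rightarrow> ('x \<Rightarrow> int) set" where
  "free_on X = {z. finite {x. z x \<noteq> 0} \<and> {x. z x \<noteq> 0} \<subseteq> X}"

definition delta :: "'x \<Rightarrow> 'x \<Rightarrow> int" where
  "delta x = (\<lambda>y. if y = x then 1 else 0)"

inductive_set int_span :: "('x \<Rightarrow> int) set \<Rightarrow> ('x \<Rightarrow> int) set" for S where
  zero: "(\<lambda>_. 0) \<in> int_span S"
| gen: "s \<in> S \<Longrightarrow> s \<in> int_span S"
| diff: "a \<in> int_span S \<Longrightarrow> b \<in> int_span S \<Longrightarrow> (\<lambda>x. a x - b x) \<in> int_span S"

definition tensor_gens :: "'a rng \<Rightarrow> ('m, 'a) rmodule \<Rightarrow> ('n, 'a) lmodule \<Rightarrow> ('m \<times> 'n \<Rightarrow> int) set" where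
  "tensor_gens A M N =
     {(\<lambda>x. delta (gadd M m m', n) x - delta (m, n) x - delta (m', n) x) | m m' n.
        m \<in> gcarr M \<and> m' \<in> gcarr M \<and> n \<in> gcarr N} \<union>
     {(\<lambda>x. delta (m, gadd N n n') x - delta (m, n) x - delta (m, n') x) | m n n'.
        m \<in> gcarr M \<and> n \<in> gcarr N \<and> n' \<in> gcarr N} \<union>
     {(\<lambda>x. delta (ract M m a, n) x - delta (m, lact N a n) x) | m a n.
        m \<in> gcarr M \<and> a \<in> rcarr A \<and> n \<in> gcarr N}"

definition tensor_rels :: "'a rng \<Rightarrow> ('m, 'a) rmodule \<Rightarrow> ('n, 'a) lmodule \<Rightarrow> ('m \<times> 'n \<Rightarrow> int) set" where
  "tensor_rels A M N = int_span (tensor_gens A M N)"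

definition push :: "('x \<Rightarrow> 'y) \<Rightarrow> ('x \<Rightarrow> int) \<Rightarrow> ('y \<Rightarrow> int)" where
  "push F z = (\<lambda>y. \<Sum>x\<in>{x. z x \<noteq> 0 \<and> F x = y}. z x)"

definition tens_map :: "('m \<Rightarrow> 'm) \<Rightarrow> ('m \<times> 'n \<Rightarrow> int) \<Rightarrow> ('m \<times> 'n \<Rightarrow> int)" where
  "tens_map f = push (\<lambda>(m, n). (f m, n))"

text \<open>Elements of Mi\<otimes>N are
  represented by elements of free_on (Mi \<times> N) modulo tensor_rels.\<close>
definition flat_left_module :: "'a rng \<Rightarrow> ('n, 'a) lmodule \<Rightarrow> 'm itself \<Rightarrow> bool" where
  "flat_left_module A N _ \<equiv>
     (\<forall>(M1 :: ('m, 'a) rmodule) M2 M3 f g.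
        unital_right_module A M1 \<and> unital_right_module A M2 \<and> unital_right_module A M3 \<and>
        right_hom A M1 M2 f \<and> right_hom A M2 M3 g \<and>
        inj_on f (gcarr M1) \<and> g ` gcarr M2 = gcarr M3 \<and>
        {m \<in> gcarr M2. g m = gzero M3} = f ` gcarr M1 \<longrightarrow>
          (\<forall>z\<in>free_on (gcarr M1 \<times> gcarr N).
              tens_map f z \<in> tensor_rels A M2 N \<longrightarrow> z \<in> tensor_rels A M1 N) \<and>
          (\<forall>z\<in>free_on (gcarr M1 \<times> gcarr N).
              tens_map g (tens_map f z) \<in> tensor_rels A M3 N) \<and>
          (\<forall>z\<in>free_on (gcarr M2 \<times> gcarr N).
              tens_map g z \<in> tensor_rels A M3 N \<longrightarrow>
              (\<exists>y\<in>free_on (gcarr M1 \<times> gcarr N).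
                 (\<lambda>x. z x - tens_map f y x) \<in> tensor_rels A M2 N)) \<and>
          (\<forall>w\<in>free_on (gcarr M3 \<times> gcarr N). \<exists>z\<in>free_on (gcarr M2 \<times> gcarr N).
              (\<lambda>x. tens_map g z x - w x) \<in> tensor_rels A M3 N))"

text \<open>Since HOL cannot quantify
  over types inside a formula, the carrier types of the simple modules ('n) and of the
  test right modules ('m) are parameters.\<close>
definition left_SF_ring :: "'a rng \<Rightarrow> 'n itself \<Rightarrow> 'm itself \<Rightarrow> bool" where
  "left_SF_ring A tn tm \<equiv>
     (\<forall>N :: ('n, 'a) lmodule. simple_left_module A N \<and> unital_left_module A N \<longrightarrow>
        flat_left_module A N tm)"

definition locally_constant :: "'g topology \<Rightarrow> ('g \<Rightarrow> 'r) \<Rightarrow> bool" where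
  "locally_constant T f \<equiv>
     (\<forall>x\<in>topspace T. \<exists>U. openin T U \<and> x \<in> U \<and> (\<forall>y\<in>U. f y = f x))"

definition steinberg_carrier :: "'g topology \<Rightarrow> ('g \<Rightarrow> 'r::zero) set" where
  "steinberg_carrier T = {f. (\<forall>x. x \<notin> topspace T \<longrightarrow> f x = 0) \<and> locally_constant T f \<and>
      compactin T (T closure_of {x \<in> topspace T. f x \<noteq> 0})}"

text \<open>Convolution; the sum ranges over the (finitely many) factorisations gamma = alpha beta
  with nonzero summand.\<close>
definition convolution :: "'g topology \<Rightarrow> ('g \<times> 'g) set \<Rightarrow> ('g \<Rightarrow> 'g \<Rightarrow> 'g)
    \<Rightarrow> ('g \<Rightarrow> 'r::field) \<Rightarrow> ('g \<Rightarrow> 'r) \<Rightarrow> ('g \<Rightarrow> 'r)" where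
  "convolution T G2 gmul f g = (\<lambda>\<gamma>. if \<gamma> \<in> topspace T then
      (\<Sum>p\<in>{(\<alpha>, \<beta>). (\<alpha>, \<beta>) \<in> G2 \<and> gmul \<alpha> \<beta> = \<gamma> \<and> f \<alpha> \<noteq> 0 \<and> g \<beta> \<noteq> 0}. f (fst p) * g (snd p))
      else 0)"

definition steinberg_algebra :: "'g topology \<Rightarrow> ('g \<times> 'g) set \<Rightarrow> ('g \<Rightarrow> 'g \<Rightarrow> 'g)
    \<Rightarrow> ('g \<Rightarrow> 'r::field) rng" where
  "steinberg_algebra T G2 gmul =
     \<lparr> rcarr = steinberg_carrier T, radd = (\<lambda>f g x. f x + g x),
       rmul = convolution T G2 gmul \<rparr>"

end

theory Submission
  imports Defs "HOL-Library.Function_Algebras"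
begin

text \<open>Suppose \<open>x\<close> lies in the isotropy group at a unit \<open>u\<close> and \<open>c x \<noteq> \<epsilon>\<close>. The finitely supported
  functions \<open>M\<close> on \<open>r\<^sup>-\<^sup>1(u)\<close> form a unital right \<open>A\<^sub>R(\<G>)\<close>-module under convolution, and left
  translation \<open>L\<close> by \<open>x\<close> is a module endomorphism. As \<open>L\<close> shifts degrees by \<open>c x\<close> and \<open>\<Gamma>\<close> is
  totally ordered, \<open>1 - L\<close> is injective, so \<open>0 \<rightarrow> M \<rightarrow> M \<rightarrow> M/(1 - L)M \<rightarrow> 0\<close> is exact. The
  finitely supported functions \<open>N\<close> on the orbit of \<open>u\<close> form a simple unital left module. The balanced
  pairing \<open>(m, n) \<mapsto> \<Sum>\<^sub>\<alpha> m(\<alpha>) n(d \<alpha>)\<close> shows \<open>\<delta>\<^sub>u \<otimes> \<delta>\<^sub>u \<noteq> 0\<close> in \<open>M \<otimes> N\<close>, whereas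
  \<open>(1 - L) \<otimes> N\<close> sends it to \<open>(\<delta>\<^sub>u - \<delta>\<^sub>x) \<otimes> \<delta>\<^sub>u = \<delta>\<^sub>u a \<otimes> \<delta>\<^sub>u = \<delta>\<^sub>u \<otimes> a \<delta>\<^sub>u = 0\<close>, where
  \<open>a = 1\<^sub>V - 1\<^sub>B\<close> for a compact open set of units \<open>V \<ni> u\<close> and a compact open bisection \<open>B \<ni> x\<close>.
  Hence \<open>N\<close> is not flat.\<close>

section \<open>Tensor products\<close>

definition supp :: "('x \<Rightarrow> 'r::zero) \<Rightarrow> 'x set" where
  "supp m = {x. m x \<noteq> 0}"

definition lin_ext :: "('p \<Rightarrow> 'r::ring_1) \<Rightarrow> ('p \<Rightarrow> int) \<Rightarrow> 'r" where
  "lin_ext \<Phi> z = (\<Sum>p\<in>supp z. of_int (z p) * \<Phi> p)"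

lemma lin_ext_eq_sum:
  "finite X \<Longrightarrow> supp z \<subseteq> X \<Longrightarrow> lin_ext \<Phi> z = (\<Sum>p\<in>X. of_int (z p) * \<Phi> p)"
  unfolding lin_ext_def by (rule sum.mono_neutral_left) (auto simp: supp_def)

lemma supp_delta: "supp (delta p) = {p}"
  by (auto simp: supp_def delta_def)

lemma lin_ext_delta: "lin_ext \<Phi> (delta p) = \<Phi> p"
  unfolding lin_ext_def supp_delta by (simp add: delta_def)

lemma supp_diff_subset: "supp (\<lambda>x. z x - w x :: 'r::group_add) \<subseteq> supp z \<union> supp w"
  by (auto simp: supp_def)

lemma lin_ext_diff:
  assumes "finite (supp z)" "finite (supp w)"
  shows "lin_ext \<Phi> (\<lambda>x. z x - w x) = lin_ext \<Phi> z - lin_ext \<Phi> w"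
proof -
  have X: "finite (supp z \<union> supp w)" using assms by simp
  show ?thesis
    using lin_ext_eq_sum[OF X supp_diff_subset, of \<Phi>]
      lin_ext_eq_sum[OF X, of z \<Phi>] lin_ext_eq_sum[OF X, of w \<Phi>]
    by (simp add: sum_subtractf left_diff_distrib)
qed

lemma finite_supp_delta2: "finite (supp (\<lambda>x. delta p x - delta q x))"
  by (rule finite_subset[OF supp_diff_subset]) (simp add: supp_delta)

lemma finite_supp_delta3: "finite (supp (\<lambda>x. delta p x - delta q x - delta q' x))"
  by (rule finite_subset[OF supp_diff_subset]) (simp add: supp_delta finite_supp_delta2)

lemma lin_ext_delta2: "lin_ext \<Phi> (\<lambda>x. delta p x - delta q x) = \<Phi> p - \<Phi> q"
  using lin_ext_diff[of "delta p" "delta q" \<Phi>] by (simp add: supp_delta lin_ext_delta)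

lemma lin_ext_delta3:
  "lin_ext \<Phi> (\<lambda>x. delta p x - delta q x - delta q' x) = \<Phi> p - \<Phi> q - \<Phi> q'"
proof -
  have "lin_ext \<Phi> (\<lambda>x. (\<lambda>x. delta p x - delta q x) x - delta q' x) =
      lin_ext \<Phi> (\<lambda>x. delta p x - delta q x) - lin_ext \<Phi> (delta q')"
    by (rule lin_ext_diff[OF finite_supp_delta2]) (simp add: supp_delta)
  then show ?thesis by (simp add: lin_ext_delta2 lin_ext_delta)
qed

lemma lin_ext_tensor_rels:
  fixes \<Phi> :: "'m \<times> 'n \<Rightarrow> 'r::ring_1"
  assumes add_left: "\<And>m m' n. m \<in> gcarr M \<Longrightarrow> m' \<in> gcarr M \<Longrightarrow> n \<in> gcarr N \<Longrightarrow>
      \<Phi> (gadd M m m', n) = \<Phi> (m, n) + \<Phi> (m', n)"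
    and add_right: "\<And>m n n'. m \<in> gcarr M \<Longrightarrow> n \<in> gcarr N \<Longrightarrow> n' \<in> gcarr N \<Longrightarrow>
      \<Phi> (m, gadd N n n') = \<Phi> (m, n) + \<Phi> (m, n')"
    and balanced: "\<And>m a n. m \<in> gcarr M \<Longrightarrow> a \<in> rcarr A \<Longrightarrow> n \<in> gcarr N \<Longrightarrow>
      \<Phi> (ract M m a, n) = \<Phi> (m, lact N a n)"
    and z: "z \<in> tensor_rels A M N"
  shows "lin_ext \<Phi> z = 0"
proof -
  have "finite (supp z) \<and> lin_ext \<Phi> z = 0"
    using z unfolding tensor_rels_def
  proof (induction rule: int_span.induct)
    case zero
    show ?case by (simp add: lin_ext_def supp_def)
  next
    case (gen s)
    then show ?case
      unfolding tensor_gens_def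
      by (elim UnE CollectE exE conjE)
        (simp_all add: finite_supp_delta2 finite_supp_delta3 lin_ext_delta2 lin_ext_delta3
          add_left add_right balanced)
  next
    case (diff z w)
    have "finite (supp (\<lambda>x. z x - w x))"
      by (rule finite_subset[OF supp_diff_subset]) (use diff.IH in simp)
    with diff.IH show ?case by (simp add: lin_ext_diff)
  qed
  then show ?thesis ..
qed

lemma delta_in_tensor_rels:
  assumes N: "left_module A N" and m: "m \<in> gcarr M" and a: "a \<in> rcarr A" and n: "n \<in> gcarr N"
    and annihilated: "lact N a n = gzero N"
  shows "delta (ract M m a, n) \<in> tensor_rels A M N"
proof -
  \<comment> \<open>\<open>m \<otimes> 0\<close> is itself a relation, since \<open>0 = 0 + 0\<close> in \<open>N\<close>.\<close>
  have zero: "gzero N \<in> gcarr N" "gadd N (gzero N) (gzero N) = gzero N"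
    using N unfolding left_module_def abgroup_def by auto
  have "(\<lambda>x. delta (ract M m a, n) x - delta (m, lact N a n) x) \<in> tensor_gens A M N"
    unfolding tensor_gens_def using m a n by blast
  moreover have "(\<lambda>x. delta (m, gadd N (gzero N) (gzero N)) x - delta (m, gzero N) x
      - delta (m, gzero N) x) \<in> tensor_gens A M N"
    unfolding tensor_gens_def using m zero(1) by blast
  ultimately have "(\<lambda>y. (delta (ract M m a, n) y - delta (m, gzero N) y) -
      (delta (m, gzero N) y - delta (m, gzero N) y - delta (m, gzero N) y)) \<in> tensor_rels A M N"
    unfolding tensor_rels_def annihilated zero(2) by (intro int_span.diff int_span.gen)
  then show ?thesis by (simp add: fun_eq_iff)
qed

lemma tens_map_delta: "tens_map f (delta (m, n)) = delta (f m, n)"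
proof
  fix y
  have "{x. delta (m, n) x \<noteq> 0 \<and> (case x of (m, n) \<Rightarrow> (f m, n)) = y} =
        (if (f m, n) = y then {(m, n)} else {})"
    by (auto simp: delta_def)
  then show "tens_map f (delta (m, n)) y = delta (f m, n) y"
    by (simp add: tens_map_def push_def delta_def)
qed

section \<open>Modules of functions\<close>

locale right_function_module =
  fixes A :: "'a rng" and F :: "('x \<Rightarrow> 'r::ab_group_add) set"
    and act :: "('x \<Rightarrow> 'r) \<Rightarrow> 'a \<Rightarrow> 'x \<Rightarrow> 'r"
  assumes zero_mem: "0 \<in> F"
    and diff_mem: "m \<in> F \<Longrightarrow> m' \<in> F \<Longrightarrow> m - m' \<in> F"
    and act_mem: "m \<in> F \<Longrightarrow> a \<in> rcarr A \<Longrightarrow> act m a \<in> F"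
    and act_add_left: "m \<in> F \<Longrightarrow> m' \<in> F \<Longrightarrow> a \<in> rcarr A \<Longrightarrow> act (m + m') a = act m a + act m' a"
    and act_add_right: "m \<in> F \<Longrightarrow> a \<in> rcarr A \<Longrightarrow> b \<in> rcarr A \<Longrightarrow>
      act m (radd A a b) = act m a + act m b"
    and act_mul: "m \<in> F \<Longrightarrow> a \<in> rcarr A \<Longrightarrow> b \<in> rcarr A \<Longrightarrow> act m (rmul A a b) = act (act m a) b"
begin

lemma add_mem: "m \<in> F \<Longrightarrow> m' \<in> F \<Longrightarrow> m + m' \<in> F"
  using diff_mem[of m "0 - m'"] diff_mem[OF zero_mem, of m'] by simp

lemma act_diff_left: "m \<in> F \<Longrightarrow> m' \<in> F \<Longrightarrow> a \<in> rcarr A \<Longrightarrow> act (m - m') a = act m a - act m' a"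
  using act_add_left[of "m - m'" m' a] diff_mem by (simp add: eq_diff_eq)

definition submodule :: "('x \<Rightarrow> 'r) set \<Rightarrow> bool" where
  "submodule I \<longleftrightarrow> I \<subseteq> F \<and> 0 \<in> I \<and> (\<forall>i\<in>I. \<forall>j\<in>I. i - j \<in> I) \<and> (\<forall>i\<in>I. \<forall>a\<in>rcarr A. act i a \<in> I)"

lemma submodule_add:
  assumes "submodule I" "i \<in> I" "j \<in> I"
  shows "i + j \<in> I"
proof -
  have "0 - j \<in> I" "i - (0 - j) \<in> I" using assms unfolding submodule_def by blast+
  then show ?thesis by simp
qed

lemma submodule_zero: "submodule {0}"
  unfolding submodule_def using zero_mem act_diff_left[OF zero_mem zero_mem] by auto

lemma submodule_image:
  assumes maps: "\<And>m. m \<in> F \<Longrightarrow> \<phi> m \<in> F"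
    and additive: "\<And>m m'. m \<in> F \<Longrightarrow> m' \<in> F \<Longrightarrow> \<phi> (m - m') = \<phi> m - \<phi> m'"
    and linear: "\<And>m a. m \<in> F \<Longrightarrow> a \<in> rcarr A \<Longrightarrow> \<phi> (act m a) = act (\<phi> m) a"
  shows "submodule (\<phi> ` F)"
proof -
  have "\<phi> 0 = 0" using additive[OF zero_mem zero_mem] by simp
  then have "0 \<in> \<phi> ` F" using zero_mem by force
  moreover have "\<phi> m - \<phi> m' \<in> \<phi> ` F" if "m \<in> F" "m' \<in> F" for m m'
    using additive[OF that, symmetric] diff_mem[OF that] by blast
  moreover have "act (\<phi> m) a \<in> \<phi> ` F" if "m \<in> F" "a \<in> rcarr A" for m a
    using linear[OF that, symmetric] act_mem[OF that] by blast
  ultimately show ?thesis using maps unfolding submodule_def by blast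
qed

definition coset :: "('x \<Rightarrow> 'r) set \<Rightarrow> ('x \<Rightarrow> 'r) \<Rightarrow> ('x \<Rightarrow> 'r) set" where
  "coset I m = {k \<in> F. k - m \<in> I}"

definition rep :: "('x \<Rightarrow> 'r) set \<Rightarrow> ('x \<Rightarrow> 'r) set \<Rightarrow> 'x \<Rightarrow> 'r" where
  "rep I X = (SOME m. m \<in> F \<and> X = coset I m)"

text \<open>The cosets of \<open>{0}\<close> are singletons, so \<open>quotient_module {0}\<close> is \<open>F\<close> itself, with the same carrier
  type as its quotients.\<close>

definition quotient_module :: "('x \<Rightarrow> 'r) set \<Rightarrow> (('x \<Rightarrow> 'r) set, 'a) rmodule" where
  "quotient_module I =
     \<lparr>gcarr = coset I ` F, gadd = \<lambda>X Y. coset I (rep I X + rep I Y), gzero = coset I 0,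
      ract = \<lambda>X a. coset I (act (rep I X) a)\<rparr>"

context
  fixes I assumes I: "submodule I"
begin

lemma coset_eq_iff: "m \<in> F \<Longrightarrow> m' \<in> F \<Longrightarrow> coset I m = coset I m' \<longleftrightarrow> m - m' \<in> I"
proof
  assume "m \<in> F" "coset I m = coset I m'"
  moreover have "m \<in> coset I m" using \<open>m \<in> F\<close> I unfolding coset_def submodule_def by simp
  ultimately show "m - m' \<in> I" unfolding coset_def by blast
next
  assume mm': "m - m' \<in> I"
  have "k - m' \<in> I \<longleftrightarrow> k - m \<in> I" for k
  proof
    assume "k - m' \<in> I"
    then have "(k - m') - (m - m') \<in> I" using mm' I unfolding submodule_def by blast
    then show "k - m \<in> I" by simp
  next
    assume "k - m \<in> I"
    then have "(k - m) + (m - m') \<in> I" using submodule_add[OF I _ mm'] by blast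
    then show "k - m' \<in> I" by simp
  qed
  then show "coset I m = coset I m'" unfolding coset_def by blast
qed

lemma rep_coset:
  assumes "m \<in> F"
  shows "rep I (coset I m) \<in> F" "rep I (coset I m) - m \<in> I"
proof -
  have "\<exists>m'. m' \<in> F \<and> coset I m = coset I m'" using assms by blast
  then have "rep I (coset I m) \<in> F \<and> coset I m = coset I (rep I (coset I m))"
    unfolding rep_def by (rule someI_ex)
  then show "rep I (coset I m) \<in> F" "rep I (coset I m) - m \<in> I"
    using coset_eq_iff assms by auto
qed

lemma quotient_add_coset:
  assumes "m \<in> F" "m' \<in> F"
  shows "gadd (quotient_module I) (coset I m) (coset I m') = coset I (m + m')"
proof -
  let ?r = "rep I (coset I m)" and ?r' = "rep I (coset I m')"
  have "(?r - m) + (?r' - m') \<in> I" using submodule_add[OF I] rep_coset assms by blast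
  then have "(?r + ?r') - (m + m') \<in> I" by (simp add: algebra_simps)
  then show ?thesis
    using coset_eq_iff add_mem rep_coset assms by (simp add: quotient_module_def)
qed

lemma quotient_act_coset:
  assumes "m \<in> F" "a \<in> rcarr A"
  shows "ract (quotient_module I) (coset I m) a = coset I (act m a)"
proof -
  let ?r = "rep I (coset I m)"
  have "act (?r - m) a \<in> I" using I rep_coset assms unfolding submodule_def by blast
  then have "act ?r a - act m a \<in> I" using act_diff_left rep_coset assms by simp
  then show ?thesis
    using coset_eq_iff act_mem rep_coset assms by (simp add: quotient_module_def)
qed

lemma quotient_simps:
  "gcarr (quotient_module I) = coset I ` F" "gzero (quotient_module I) = coset I 0"
  by (simp_all add: quotient_module_def)

lemma quotient_act_radd:
  assumes "m \<in> F" "a \<in> rcarr A" "b \<in> rcarr A"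
  shows "ract (quotient_module I) (coset I m) (radd A a b) = coset I (act m a + act m b)"
proof -
  let ?r = "rep I (coset I m)"
  have r: "?r \<in> F" using rep_coset assms by blast
  have "coset I (act ?r a) = coset I (act m a)" "coset I (act ?r b) = coset I (act m b)"
    using quotient_act_coset assms by (simp_all add: quotient_module_def)
  then have "coset I (act ?r a + act ?r b) = coset I (act m a + act m b)"
    using quotient_add_coset act_mem r assms by metis
  then show ?thesis using act_add_right r assms by (simp add: quotient_module_def)
qed

lemma quotient_act_rmul:
  assumes "m \<in> F" "a \<in> rcarr A" "b \<in> rcarr A"
  shows "ract (quotient_module I) (coset I m) (rmul A a b) =
      ract (quotient_module I) (ract (quotient_module I) (coset I m) a) b"
proof -
  let ?r = "rep I (coset I m)"
  have r: "?r \<in> F" using rep_coset assms by blast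
  have "ract (quotient_module I) (coset I m) (rmul A a b) = coset I (act (act ?r a) b)"
    using act_mul r assms by (simp add: quotient_module_def)
  also have "\<dots> = ract (quotient_module I) (coset I (act ?r a)) b"
    using quotient_act_coset act_mem r assms by simp
  also have "coset I (act ?r a) = ract (quotient_module I) (coset I m) a"
    by (simp add: quotient_module_def)
  finally show ?thesis .
qed

lemma right_module_quotient: "right_module A (quotient_module I)"
proof -
  have "\<exists>m'\<in>F. coset I (m + m') = coset I 0" if "m \<in> F" for m
    using diff_mem[OF zero_mem that] by (intro bexI[of _ "0 - m"]) simp_all
  then show ?thesis
    unfolding right_module_def abgroup_def quotient_simps
    by (simp add: quotient_add_coset quotient_act_coset quotient_act_radd quotient_act_rmul
        add_mem act_mem zero_mem act_add_left ac_simps)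
qed

lemma unital_right_module_quotient:
  assumes local_units: "\<And>m. m \<in> F \<Longrightarrow> \<exists>a\<in>rcarr A. act m a = m"
  shows "unital_right_module A (quotient_module I)"
  unfolding unital_right_module_def
proof (intro conjI ballI right_module_quotient)
  fix X assume "X \<in> gcarr (quotient_module I)"
  then obtain m where m: "m \<in> F" "X = coset I m" by (auto simp: quotient_simps)
  then obtain a where a: "a \<in> rcarr A" "act m a = m" using local_units by blast
  have "gadd (quotient_module I) (ract (quotient_module I) X a) (gzero (quotient_module I)) = X"
    using m a by (simp add: quotient_act_coset quotient_add_coset quotient_simps zero_mem)
  then show "\<exists>ps. set ps \<subseteq> gcarr (quotient_module I) \<times> rcarr A \<and>
      X = foldr (\<lambda>(m', a) acc. gadd (quotient_module I) (ract (quotient_module I) m' a) acc) ps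
        (gzero (quotient_module I))"
    using m a by (intro exI[of _ "[(X, a)]"]) (auto simp: quotient_simps)
qed

end

definition induced :: "(('x \<Rightarrow> 'r) \<Rightarrow> 'x \<Rightarrow> 'r) \<Rightarrow> ('x \<Rightarrow> 'r) set \<Rightarrow> ('x \<Rightarrow> 'r) set
    \<Rightarrow> ('x \<Rightarrow> 'r) set \<Rightarrow> ('x \<Rightarrow> 'r) set" where
  "induced \<phi> I J X = coset J (\<phi> (rep I X))"

context
  fixes \<phi> and I J
  assumes I: "submodule I" and J: "submodule J"
    and maps: "\<And>m. m \<in> F \<Longrightarrow> \<phi> m \<in> F"
    and additive: "\<And>m m'. m \<in> F \<Longrightarrow> m' \<in> F \<Longrightarrow> \<phi> (m - m') = \<phi> m - \<phi> m'"
    and linear: "\<And>m a. m \<in> F \<Longrightarrow> a \<in> rcarr A \<Longrightarrow> \<phi> (act m a) = act (\<phi> m) a"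
    and respects: "\<phi> ` I \<subseteq> J"
begin

lemma induced_coset:
  assumes m: "m \<in> F"
  shows "induced \<phi> I J (coset I m) = coset J (\<phi> m)"
proof -
  let ?r = "rep I (coset I m)"
  have "\<phi> (?r - m) \<in> J" using rep_coset[OF I m] respects by blast
  then have "\<phi> ?r - \<phi> m \<in> J" using additive rep_coset[OF I m] m by simp
  then show ?thesis unfolding induced_def using coset_eq_iff[OF J] maps rep_coset[OF I m] m by simp
qed

lemma additive_add: "m \<in> F \<Longrightarrow> m' \<in> F \<Longrightarrow> \<phi> (m + m') = \<phi> m + \<phi> m'"
  using additive[of "m + m'" m'] add_mem by (simp add: eq_diff_eq)

lemma right_hom_induced: "right_hom A (quotient_module I) (quotient_module J) (induced \<phi> I J)"
  unfolding right_hom_def quotient_simps[OF I] quotient_simps[OF J]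
  by (simp add: induced_coset maps quotient_add_coset[OF I] quotient_add_coset[OF J]
      quotient_act_coset[OF I] quotient_act_coset[OF J] add_mem act_mem additive_add linear)

lemma induced_image: "induced \<phi> I J ` gcarr (quotient_module I) = coset J ` \<phi> ` F"
  by (force simp: quotient_simps[OF I] induced_coset)

lemma inj_on_induced:
  assumes "\<And>m. m \<in> F \<Longrightarrow> \<phi> m \<in> J \<Longrightarrow> m \<in> I"
  shows "inj_on (induced \<phi> I J) (gcarr (quotient_module I))"
proof (rule inj_onI)
  fix X Y assume "X \<in> gcarr (quotient_module I)" "Y \<in> gcarr (quotient_module I)"
    and eq: "induced \<phi> I J X = induced \<phi> I J Y"
  then obtain m m' where m: "m \<in> F" "m' \<in> F" "X = coset I m" "Y = coset I m'"
    by (auto simp: quotient_simps[OF I])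
  then have "\<phi> (m - m') \<in> J" using eq coset_eq_iff[OF J] maps additive by (simp add: induced_coset)
  then show "X = Y" using assms diff_mem m coset_eq_iff[OF I] by simp
qed

end

lemma kernel_quotient_map:
  assumes J: "submodule J"
  shows "{X \<in> gcarr (quotient_module {0}). induced id {0} J X = gzero (quotient_module J)} =
    coset {0} ` J"
proof -
  have JF: "J \<subseteq> F" and J0: "0 \<in> J" using J unfolding submodule_def by blast+
  have "induced id {0} J (coset {0} m) = gzero (quotient_module J) \<longleftrightarrow> m \<in> J" if "m \<in> F" for m
    using induced_coset[OF submodule_zero J, of id, simplified, OF J0 that]
      coset_eq_iff[OF J that zero_mem] quotient_simps[OF J] by simp
  then show ?thesis
    using JF by (auto simp: quotient_simps[OF submodule_zero])
qed

lemma cokernel_short_exact: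
  assumes maps: "\<And>m. m \<in> F \<Longrightarrow> \<phi> m \<in> F"
    and additive: "\<And>m m'. m \<in> F \<Longrightarrow> m' \<in> F \<Longrightarrow> \<phi> (m - m') = \<phi> m - \<phi> m'"
    and linear: "\<And>m a. m \<in> F \<Longrightarrow> a \<in> rcarr A \<Longrightarrow> \<phi> (act m a) = act (\<phi> m) a"
    and injective: "\<And>m. m \<in> F \<Longrightarrow> \<phi> m = 0 \<Longrightarrow> m = 0"
  defines "f \<equiv> induced \<phi> {0} {0}" and "g \<equiv> induced id {0} (\<phi> ` F)"
  shows "right_hom A (quotient_module {0}) (quotient_module {0}) f"
    and "right_hom A (quotient_module {0}) (quotient_module (\<phi> ` F)) g"
    and "inj_on f (gcarr (quotient_module {0}))"
    and "g ` gcarr (quotient_module {0}) = gcarr (quotient_module (\<phi> ` F))"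
    and "{X \<in> gcarr (quotient_module {0}). g X = gzero (quotient_module (\<phi> ` F))} =
      f ` gcarr (quotient_module {0})"
proof -
  have J: "submodule (\<phi> ` F)" using submodule_image maps additive linear by blast
  have "\<phi> 0 = 0" using additive[OF zero_mem zero_mem] by simp
  then have J0: "0 \<in> \<phi> ` F" and resp_f: "\<phi> ` {0} \<subseteq> {0}" using zero_mem by force+
  note f_props = right_hom_induced induced_image inj_on_induced
  note f_props = f_props[OF submodule_zero submodule_zero maps additive linear resp_f]
  note g_props = right_hom_induced induced_image
  note g_props = g_props[OF submodule_zero J, of id, simplified, OF J0]
  show "right_hom A (quotient_module {0}) (quotient_module {0}) f"
    unfolding f_def by (rule f_props)
  show "right_hom A (quotient_module {0}) (quotient_module (\<phi> ` F)) g"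
    unfolding g_def by (rule g_props)
  show "inj_on f (gcarr (quotient_module {0}))"
    unfolding f_def
  proof (intro f_props)
    fix m assume "m \<in> F" "\<phi> m \<in> {0}"
    then show "m \<in> {0}" using injective by simp
  qed
  show "g ` gcarr (quotient_module {0}) = gcarr (quotient_module (\<phi> ` F))"
    unfolding g_def using g_props by (simp add: quotient_simps[OF J])
  show "{X \<in> gcarr (quotient_module {0}). g X = gzero (quotient_module (\<phi> ` F))} =
      f ` gcarr (quotient_module {0})"
    unfolding f_def g_def kernel_quotient_map[OF J] using f_props(2) by simp
qed

end

locale left_function_module =
  fixes A :: "'a rng" and F :: "('x \<Rightarrow> 'r::ab_group_add) set"
    and act :: "'a \<Rightarrow> ('x \<Rightarrow> 'r) \<Rightarrow> 'x \<Rightarrow> 'r"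
  assumes zero_mem: "0 \<in> F"
    and diff_mem: "n \<in> F \<Longrightarrow> n' \<in> F \<Longrightarrow> n - n' \<in> F"
    and act_mem: "a \<in> rcarr A \<Longrightarrow> n \<in> F \<Longrightarrow> act a n \<in> F"
    and act_add_left: "a \<in> rcarr A \<Longrightarrow> b \<in> rcarr A \<Longrightarrow> n \<in> F \<Longrightarrow>
      act (radd A a b) n = act a n + act b n"
    and act_add_right: "a \<in> rcarr A \<Longrightarrow> n \<in> F \<Longrightarrow> n' \<in> F \<Longrightarrow> act a (n + n') = act a n + act a n'"
    and act_mul: "a \<in> rcarr A \<Longrightarrow> b \<in> rcarr A \<Longrightarrow> n \<in> F \<Longrightarrow> act (rmul A a b) n = act a (act b n)"
begin

lemma add_mem: "n \<in> F \<Longrightarrow> n' \<in> F \<Longrightarrow> n + n' \<in> F"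
  using diff_mem[of n "0 - n'"] diff_mem[OF zero_mem, of n'] by simp

text \<open>Elements are wrapped as singletons, so that the carrier type matches that of the quotient modules
  above, as the definition of flatness requires.\<close>

definition singleton_module :: "(('x \<Rightarrow> 'r) set, 'a) lmodule" where
  "singleton_module =
     \<lparr>gcarr = (\<lambda>n. {n}) ` F, gadd = \<lambda>X Y. {the_elem X + the_elem Y}, gzero = {0},
      lact = \<lambda>a X. {act a (the_elem X)}\<rparr>"

lemma singleton_module_simps:
  "gcarr singleton_module = (\<lambda>n. {n}) ` F" "gzero singleton_module = {0}"
  "gadd singleton_module {n} {n'} = {n + n'}" "lact singleton_module a {n} = {act a n}"
  by (simp_all add: singleton_module_def)

lemma left_module_singleton: "left_module A singleton_module"
proof -
  have "\<exists>n'\<in>F. {n + n'} = {0}" if "n \<in> F" for n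
    using diff_mem[OF zero_mem that] by (intro bexI[of _ "0 - n"]) simp_all
  then show ?thesis
    unfolding left_module_def abgroup_def singleton_module_simps
    by (simp add: singleton_module_simps zero_mem add_mem act_mem
        act_add_left act_add_right act_mul ac_simps)
qed

lemma unital_left_module_singleton:
  assumes local_units: "\<And>n. n \<in> F \<Longrightarrow> \<exists>a\<in>rcarr A. act a n = n"
  shows "unital_left_module A singleton_module"
  unfolding unital_left_module_def
proof (intro conjI ballI left_module_singleton)
  fix X assume "X \<in> gcarr singleton_module"
  then obtain n where n: "n \<in> F" "X = {n}" by (auto simp: singleton_module_simps)
  then obtain a where a: "a \<in> rcarr A" "act a n = n" using local_units by blast
  show "\<exists>ps. set ps \<subseteq> rcarr A \<times> gcarr singleton_module \<and>
      X = foldr (\<lambda>(a, m) acc. gadd singleton_module (lact singleton_module a m) acc) ps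
        (gzero singleton_module)"
    using n a by (intro exI[of _ "[(a, X)]"]) (auto simp: singleton_module_simps)
qed

lemma simple_left_module_singleton:
  assumes nontrivial: "n \<in> F" "n \<noteq> 0"
    and generated: "\<And>S n. S \<subseteq> F \<Longrightarrow> 0 \<in> S \<Longrightarrow> (\<forall>k\<in>S. \<forall>k'\<in>S. k + k' \<in> S) \<Longrightarrow>
      (\<forall>a\<in>rcarr A. \<forall>k\<in>S. act a k \<in> S) \<Longrightarrow> n \<in> S \<Longrightarrow> n \<noteq> 0 \<Longrightarrow> F \<subseteq> S"
  shows "simple_left_module A singleton_module"
  unfolding simple_left_module_def
proof (intro conjI allI impI left_module_singleton)
  show "gcarr singleton_module \<noteq> {gzero singleton_module}"
    using nontrivial by (auto simp: singleton_module_simps)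
next
  fix S assume S: "left_submodule A singleton_module S"
  show "S = {gzero singleton_module} \<or> S = gcarr singleton_module"
  proof (cases "S = {gzero singleton_module}")
    case False
    let ?S = "the_elem ` S"
    have sub: "S \<subseteq> (\<lambda>n. {n}) ` F" and closed:
      "{0} \<in> S" "\<forall>X\<in>S. \<forall>Y\<in>S. gadd singleton_module X Y \<in> S"
      "\<forall>a\<in>rcarr A. \<forall>X\<in>S. lact singleton_module a X \<in> S"
      using S by (simp_all add: left_submodule_def singleton_module_simps)
    have mem: "k \<in> ?S \<longleftrightarrow> {k} \<in> S" for k
    proof
      assume "k \<in> ?S"
      then obtain X where "X \<in> S" "k = the_elem X" by blast
      moreover obtain k' where "X = {k'}" using sub \<open>X \<in> S\<close> by blast
      ultimately show "{k} \<in> S" by simp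
    next
      assume "{k} \<in> S"
      then show "k \<in> ?S" by (metis image_eqI the_elem_eq)
    qed
    have SF: "?S \<subseteq> F" using sub by auto
    have zero: "0 \<in> ?S" using closed(1) mem by blast
    have add: "k + k' \<in> ?S" if "k \<in> ?S" "k' \<in> ?S" for k k'
      using closed(2) that unfolding mem by (metis singleton_module_simps(3))
    have act: "act a k \<in> ?S" if "a \<in> rcarr A" "k \<in> ?S" for a k
      using closed(3) that unfolding mem by (metis singleton_module_simps(4))
    obtain X where X: "X \<in> S" "X \<noteq> {0}"
      using False closed(1) unfolding singleton_module_simps by blast
    obtain k where "X = {k}" using X sub by blast
    then have "the_elem X \<in> ?S" "the_elem X \<noteq> 0" using X by (blast, simp)
    then have "F \<subseteq> ?S"
      by (intro generated[OF SF zero]) (auto intro: add act)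
    then have "(\<lambda>n. {n}) ` F \<subseteq> S" using mem by blast
    with sub have "S = (\<lambda>n. {n}) ` F" by (rule subset_antisym)
    then show ?thesis by (simp add: singleton_module_simps)
  qed simp
qed

end

definition fin_funs :: "'x set \<Rightarrow> ('x \<Rightarrow> 'r::zero) set" where
  "fin_funs S = {m. finite (supp m) \<and> supp m \<subseteq> S}"

lemma zero_fin_funs: "0 \<in> fin_funs S"
  by (simp add: fin_funs_def supp_def)

lemma diff_fin_funs:
  fixes m m' :: "'x \<Rightarrow> 'r::group_add"
  shows "m \<in> fin_funs S \<Longrightarrow> m' \<in> fin_funs S \<Longrightarrow> m - m' \<in> fin_funs S"
  unfolding fin_funs_def using supp_diff_subset[of m m'] by (auto simp: fun_diff_def intro: finite_subset)

definition pointmass :: "'x \<Rightarrow> 'r::zero \<Rightarrow> 'x \<Rightarrow> 'r" where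
  "pointmass w k = (\<lambda>v. if v = w then k else 0)"

lemma pointmass_fin_funs: "w \<in> S \<Longrightarrow> pointmass w k \<in> fin_funs S"
  unfolding fin_funs_def supp_def pointmass_def by (auto intro: finite_subset[of _ "{w}"])

section \<open>Groupoids\<close>

locale groupoid_laws =
  fixes T :: "'g topology" and G2 :: "('g \<times> 'g) set"
    and gmul :: "'g \<Rightarrow> 'g \<Rightarrow> 'g" and ginv :: "'g \<Rightarrow> 'g"
  assumes groupoid: "groupoid T G2 gmul ginv"
begin

abbreviation "G \<equiv> topspace T"
abbreviation "G0 \<equiv> unit_space T gmul ginv"
abbreviation "d \<equiv> gdom gmul ginv"
abbreviation "r \<equiv> gran gmul ginv"

lemma inv_mem: "x \<in> G \<Longrightarrow> ginv x \<in> G"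
  and inv_inv: "x \<in> G \<Longrightarrow> ginv (ginv x) = x"
  and composable_mem: "(x, y) \<in> G2 \<Longrightarrow> x \<in> G \<and> y \<in> G"
  and mul_mem: "(x, y) \<in> G2 \<Longrightarrow> gmul x y \<in> G"
  and mul_assoc: "(x, y) \<in> G2 \<Longrightarrow> (y, z) \<in> G2 \<Longrightarrow>
    (gmul x y, z) \<in> G2 \<and> (x, gmul y z) \<in> G2 \<and> gmul (gmul x y) z = gmul x (gmul y z)"
  and composable_inv_left: "x \<in> G \<Longrightarrow> (ginv x, x) \<in> G2"
  and cancel_left: "(x, y) \<in> G2 \<Longrightarrow> gmul (ginv x) (gmul x y) = y"
  and cancel_right: "(x, y) \<in> G2 \<Longrightarrow> gmul (gmul x y) (ginv y) = x"
  using groupoid unfolding groupoid_def by (auto simp del: split_paired_All)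

lemma composable_inv_right: "x \<in> G \<Longrightarrow> (x, ginv x) \<in> G2"
  using composable_inv_left[of "ginv x"] inv_mem inv_inv by auto

lemma d_mem: "x \<in> G \<Longrightarrow> d x \<in> G"
  by (simp add: gdom_def composable_inv_left mul_mem)

lemma d_inv: "x \<in> G \<Longrightarrow> d (ginv x) = r x"
  and r_inv: "x \<in> G \<Longrightarrow> r (ginv x) = d x"
  using inv_inv by (simp_all add: gran_def gdom_def)

lemma mul_r_left: "x \<in> G \<Longrightarrow> (r x, x) \<in> G2 \<and> gmul (r x) x = x"
  and mul_d_right: "x \<in> G \<Longrightarrow> (x, d x) \<in> G2 \<and> gmul x (d x) = x"
proof -
  assume x: "x \<in> G"
  have c: "(x, ginv x) \<in> G2" "(ginv x, x) \<in> G2"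
    using x composable_inv_left composable_inv_right by auto
  have "gmul (gmul x (ginv x)) (ginv (ginv x)) = x" using cancel_right[OF c(1)] .
  then have "gmul (gmul x (ginv x)) x = x" "gmul x (gmul (ginv x) x) = x"
    using x inv_inv mul_assoc[OF c] by auto
  then show "(r x, x) \<in> G2 \<and> gmul (r x) x = x" "(x, d x) \<in> G2 \<and> gmul x (d x) = x"
    using mul_assoc[OF c] by (auto simp: gran_def gdom_def)
qed

lemma composable_d_r: "(x, y) \<in> G2 \<Longrightarrow> d x = r y"
proof -
  assume xy: "(x, y) \<in> G2"
  have x: "x \<in> G" and y: "y \<in> G" using composable_mem xy by auto
  have a: "(d x, y) \<in> G2" "gmul (d x) y = y"
    using mul_assoc[OF composable_inv_left[OF x] xy] cancel_left[OF xy] by (auto simp: gdom_def)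
  have "gmul (gmul (d x) y) (ginv y) = gmul (d x) (gmul y (ginv y))"
    using mul_assoc[OF a(1) composable_inv_right[OF y]] by simp
  moreover have "gmul (gmul (d x) y) (ginv y) = d x" using cancel_right[OF a(1)] .
  ultimately show ?thesis using a(2) by (simp add: gran_def)
qed

lemma composable_iff: "(x, y) \<in> G2 \<longleftrightarrow> x \<in> G \<and> y \<in> G \<and> d x = r y"
proof
  assume xy: "x \<in> G \<and> y \<in> G \<and> d x = r y"
  then have "(x, d x) \<in> G2" "(d x, y) \<in> G2" using mul_d_right mul_r_left by (blast, metis)
  then have "(x, gmul (d x) y) \<in> G2" using mul_assoc by blast
  then show "(x, y) \<in> G2" using xy mul_r_left by auto
qed (use composable_d_r composable_mem in blast)

lemma d_mul: "(x, y) \<in> G2 \<Longrightarrow> d (gmul x y) = d y"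
proof -
  assume xy: "(x, y) \<in> G2"
  have y: "y \<in> G" using composable_mem xy by auto
  have "(gmul x y, ginv y) \<in> G2" using mul_assoc[OF xy composable_inv_right[OF y]] by auto
  then have "d (gmul x y) = r (ginv y)" using composable_d_r by auto
  then show ?thesis using r_inv y by simp
qed

lemma r_mul: "(x, y) \<in> G2 \<Longrightarrow> r (gmul x y) = r x"
proof -
  assume xy: "(x, y) \<in> G2"
  have x: "x \<in> G" using composable_mem xy by auto
  have "(ginv x, gmul x y) \<in> G2" using mul_assoc[OF composable_inv_left[OF x] xy] by auto
  then have "d (ginv x) = r (gmul x y)" using composable_d_r by auto
  then show ?thesis using d_inv x by simp
qed

lemma d_idem: "x \<in> G \<Longrightarrow> d (d x) = d x"
  using d_mul[OF composable_inv_left] by (simp add: gdom_def)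

lemma r_d: "x \<in> G \<Longrightarrow> r (d x) = d x"
  using r_mul[OF composable_inv_left] r_inv by (simp add: gdom_def)

lemma unit_space_iff: "v \<in> G0 \<longleftrightarrow> v \<in> G \<and> d v = v"
  unfolding unit_space_def using d_mem d_idem by force

lemma d_unit: "x \<in> G \<Longrightarrow> d x \<in> G0"
  using unit_space_iff d_mem d_idem by auto

lemma r_unit: "x \<in> G \<Longrightarrow> r x \<in> G0"
  using d_unit[of "ginv x"] d_inv inv_mem by auto

lemma unit_r: "v \<in> G0 \<Longrightarrow> r v = v"
  using unit_space_iff r_d by metis

lemma unit_mul_left: "v \<in> G0 \<Longrightarrow> (v, y) \<in> G2 \<Longrightarrow> gmul v y = y"
  using composable_d_r mul_r_left composable_mem unit_space_iff by metis

lemma unit_mul_right: "v \<in> G0 \<Longrightarrow> (y, v) \<in> G2 \<Longrightarrow> gmul y v = y"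
  using composable_d_r mul_d_right composable_mem unit_r by metis

lemma unit_inv: "v \<in> G0 \<Longrightarrow> ginv v = v"
proof -
  assume v: "v \<in> G0"
  then have "v \<in> G" "gmul (ginv v) v = v" using unit_space_iff by (auto simp: gdom_def)
  moreover have "gmul (ginv v) v = ginv v"
    using unit_mul_right[OF v] composable_inv_left \<open>v \<in> G\<close> by auto
  ultimately show ?thesis by simp
qed

lemma composable_ldiv: "\<alpha> \<in> G \<Longrightarrow> \<beta> \<in> G \<Longrightarrow> r \<beta> = r \<alpha> \<Longrightarrow> (ginv \<alpha>, \<beta>) \<in> G2"
  using composable_iff d_inv inv_mem by auto

lemma mul_ldiv: "\<alpha> \<in> G \<Longrightarrow> \<beta> \<in> G \<Longrightarrow> r \<beta> = r \<alpha> \<Longrightarrow> gmul \<alpha> (gmul (ginv \<alpha>) \<beta>) = \<beta>"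
  using cancel_left[OF composable_ldiv, of \<alpha> \<beta>] inv_inv by auto

lemma ldiv_mem: "\<alpha> \<in> G \<Longrightarrow> \<beta> \<in> G \<Longrightarrow> r \<beta> = r \<alpha> \<Longrightarrow> gmul (ginv \<alpha>) \<beta> \<in> G"
  using mul_mem[OF composable_ldiv] by auto

lemma r_ldiv: "\<alpha> \<in> G \<Longrightarrow> \<beta> \<in> G \<Longrightarrow> r \<beta> = r \<alpha> \<Longrightarrow> r (gmul (ginv \<alpha>) \<beta>) = d \<alpha>"
  using r_mul[OF composable_ldiv, of \<alpha> \<beta>] r_inv by auto

lemma ldiv_mul:
  assumes "(x, \<alpha>) \<in> G2" "\<beta> \<in> G" "r \<beta> = r x"
  shows "gmul (ginv (gmul x \<alpha>)) \<beta> = gmul (ginv \<alpha>) (gmul (ginv x) \<beta>)"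
proof -
  have x: "x \<in> G" and \<alpha>: "\<alpha> \<in> G" using assms composable_mem by auto
  let ?q = "gmul (ginv x) \<beta>"
  have q: "?q \<in> G" "r ?q = r \<alpha>" "gmul x ?q = \<beta>"
    using ldiv_mem r_ldiv mul_ldiv composable_d_r x assms by auto
  then have c: "(\<alpha>, gmul (ginv \<alpha>) ?q) \<in> G2" "gmul \<alpha> (gmul (ginv \<alpha>) ?q) = ?q"
    using composable_iff ldiv_mem r_ldiv mul_ldiv \<alpha> by auto
  then have "(gmul x \<alpha>, gmul (ginv \<alpha>) ?q) \<in> G2" "gmul (gmul x \<alpha>) (gmul (ginv \<alpha>) ?q) = \<beta>"
    using mul_assoc[OF assms(1) c(1)] q by auto
  then show ?thesis using cancel_left by metis
qed

end

section \<open>Ample groupoids and the Steinberg carrier\<close>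

lemma steinberg_carrier_add:
  fixes a b :: "'x \<Rightarrow> 'r::monoid_add"
  assumes a: "a \<in> steinberg_carrier T" and b: "b \<in> steinberg_carrier T"
  shows "(\<lambda>x. a x + b x) \<in> steinberg_carrier T"
proof -
  let ?f = "\<lambda>x. a x + b x"
  have la: "locally_constant T a" and lb: "locally_constant T b"
    using a b unfolding steinberg_carrier_def by simp_all
  have "locally_constant T ?f" unfolding locally_constant_def
  proof
    fix x assume x: "x \<in> topspace T"
    obtain U where U: "openin T U" "x \<in> U" "\<forall>y\<in>U. a y = a x"
      using la x unfolding locally_constant_def by blast
    obtain V where V: "openin T V" "x \<in> V" "\<forall>y\<in>V. b y = b x"
      using lb x unfolding locally_constant_def by blast
    have "openin T (U \<inter> V)" using U(1) V(1) by (rule openin_Int)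
    moreover have "\<forall>y\<in>U \<inter> V. ?f y = ?f x" using U(3) V(3) by simp
    ultimately show "\<exists>W. openin T W \<and> x \<in> W \<and> (\<forall>y\<in>W. ?f y = ?f x)"
      using U(2) V(2) by blast
  qed
  moreover have "compactin T (T closure_of {x \<in> topspace T. ?f x \<noteq> 0})"
  proof -
    let ?A = "{x \<in> topspace T. a x \<noteq> 0}" and ?B = "{x \<in> topspace T. b x \<noteq> 0}"
    have ca: "compactin T (T closure_of ?A)" and cb: "compactin T (T closure_of ?B)"
      using a b unfolding steinberg_carrier_def by simp_all
    have "T closure_of {x \<in> topspace T. ?f x \<noteq> 0} \<subseteq> T closure_of (?A \<union> ?B)"
      by (rule closure_of_mono) auto
    also have "\<dots> = T closure_of ?A \<union> T closure_of ?B" by (rule closure_of_Un)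
    finally show ?thesis
      by (rule closed_compactin[OF compactin_Un[OF ca cb]]) (rule closedin_closure_of)
  qed
  moreover have "\<forall>x. x \<notin> topspace T \<longrightarrow> ?f x = 0"
    using a b unfolding steinberg_carrier_def by simp
  ultimately show ?thesis unfolding steinberg_carrier_def mem_Collect_eq by blast
qed

lemma scaled_indicator_steinberg:
  fixes c :: "'r::field"
  assumes "Hausdorff_space T" "compactin T K" "openin T K"
  shows "(\<lambda>x. c * indicator K x) \<in> steinberg_carrier T"
proof -
  have closed: "closedin T K" using compactin_imp_closedin assms by blast
  have KG: "K \<subseteq> topspace T" using openin_subset assms by blast
  let ?f = "\<lambda>x. c * indicator K x :: 'r"
  have "locally_constant T ?f" unfolding locally_constant_def
  proof
    fix x assume x: "x \<in> topspace T"
    let ?U = "if x \<in> K then K else topspace T - K"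
    have "openin T ?U" using assms closed by auto
    then show "\<exists>U. openin T U \<and> x \<in> U \<and> (\<forall>y\<in>U. ?f y = ?f x)"
      using x by (intro exI[of _ ?U]) (auto simp: indicator_def)
  qed
  moreover have "T closure_of {x \<in> topspace T. ?f x \<noteq> 0} \<subseteq> K"
    using closed by (intro closure_of_minimal) (auto simp: indicator_def)
  then have "compactin T (T closure_of {x \<in> topspace T. ?f x \<noteq> 0})"
    using assms(2) closed_compactin closedin_closure_of by blast
  moreover have "\<forall>x. x \<notin> topspace T \<longrightarrow> ?f x = 0" using KG by (auto simp: indicator_def)
  ultimately show ?thesis unfolding steinberg_carrier_def mem_Collect_eq by blast
qed

locale ample_Hausdorff_groupoid = groupoid_laws T G2 gmul ginv
  for T :: "'g topology" and G2 :: "('g \<times> 'g) set"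
    and gmul :: "'g \<Rightarrow> 'g \<Rightarrow> 'g" and ginv :: "'g \<Rightarrow> 'g" +
  assumes ample: "ample_groupoid T G2 gmul ginv" and Hausdorff: "Hausdorff_space T"
begin

lemma continuous_map_d: "continuous_map T T d"
proof -
  have mul: "continuous_map (subtopology (prod_topology T T) G2) T (\<lambda>(x, y). gmul x y)"
    and inv: "continuous_map T T ginv"
    using ample unfolding ample_groupoid_def etale_groupoid_def topological_groupoid_def by auto
  have "continuous_map T (subtopology (prod_topology T T) G2) (\<lambda>x. (ginv x, x))"
    using inv composable_inv_left
    by (intro continuous_map_into_subtopology continuous_map_pairedI) (auto simp: id_def)
  from continuous_map_compose[OF this mul] show ?thesis by (simp add: o_def gdom_def[abs_def])
qed

lemma openin_unit_space: "openin T G0"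
proof (rule openin_subopen[THEN iffD2], intro ballI)
  fix v assume v: "v \<in> G0"
  then have vG: "v \<in> G" using unit_space_iff by blast
  obtain U where U: "openin T U" "v \<in> U"
    "homeomorphic_map (subtopology T U) (subtopology T (d ` U)) d"
    using ample vG unfolding ample_groupoid_def etale_groupoid_def by blast
  have "inj_on d U"
    using homeomorphic_imp_injective_map[OF U(3)] openin_subset[OF U(1)]
    by (simp add: Int_absorb1)
  let ?V = "{y \<in> G. d y \<in> U} \<inter> U"
  have "openin T ?V" using openin_continuous_map_preimage[OF continuous_map_d U(1)] U(1) by auto
  moreover have "v \<in> ?V" using v vG U unit_space_iff by auto
  moreover have "?V \<subseteq> G0"
  proof
    fix y assume y: "y \<in> ?V"
    then have "d (d y) = d y" "y \<in> G" using d_idem by auto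
    then have "d y = y" using \<open>inj_on d U\<close> y unfolding inj_on_def by blast
    then show "y \<in> G0" using y unit_space_iff by auto
  qed
  ultimately show "\<exists>V. openin T V \<and> v \<in> V \<and> V \<subseteq> G0" by blast
qed

lemma compact_open_bisection_nbhd:
  "x \<in> W \<Longrightarrow> openin T W \<Longrightarrow>
    \<exists>B. open_bisection T gmul ginv B \<and> compactin T B \<and> x \<in> B \<and> B \<subseteq> W"
  using ample unfolding ample_groupoid_def by blast

lemma open_bisection_openin: "open_bisection T gmul ginv B \<Longrightarrow> openin T B"
  unfolding open_bisection_def by blast

lemma open_bisection_inj:
  assumes "open_bisection T gmul ginv B"
  shows "inj_on d B" "inj_on r B"
proof -
  have "B \<subseteq> G" using assms openin_subset unfolding open_bisection_def by blast
  then show "inj_on d B" "inj_on r B"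
    using assms homeomorphic_imp_injective_map unfolding open_bisection_def
    by (metis Int_absorb1 topspace_subtopology)+
qed

lemma compact_open_units_nbhd:
  assumes "v \<in> G0" "openin T W" "v \<in> W"
  shows "\<exists>B. compactin T B \<and> openin T B \<and> v \<in> B \<and> B \<subseteq> W \<inter> G0"
  using compact_open_bisection_nbhd[of v "W \<inter> G0"] openin_unit_space assms open_bisection_openin
  by blast

lemma finite_units_compact_open_nbhd:
  assumes "finite V" "V \<subseteq> G0"
  shows "\<exists>W. compactin T W \<and> openin T W \<and> V \<subseteq> W \<and> W \<subseteq> G0"
  using assms
proof (induction V rule: finite_induct)
  case empty
  show ?case by (intro exI[of _ "{}"]) auto
next
  case (insert v V)
  then obtain W where W: "compactin T W" "openin T W" "V \<subseteq> W" "W \<subseteq> G0" by auto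
  obtain B where B: "compactin T B" "openin T B" "v \<in> B" "B \<subseteq> G0"
    using compact_open_units_nbhd[of v G] insert unit_space_iff by auto
  show ?case using W B by (intro exI[of _ "W \<union> B"]) (auto intro: compactin_Un)
qed

text \<open>Compact supports are covered by finitely many bisections, on each of which \<open>d\<close> and \<open>r\<close> are
  injective.\<close>

lemma finite_fibre:
  assumes a: "a \<in> steinberg_carrier T" and h: "h = d \<or> h = r"
  shows "finite {\<gamma>. a \<gamma> \<noteq> 0 \<and> h \<gamma> = v}"
proof -
  let ?S = "{x \<in> G. a x \<noteq> 0}"
  let ?K = "T closure_of ?S"
  let ?U = "{B. open_bisection T gmul ginv B}"
  have K: "compactin T ?K" and z: "\<forall>x. x \<notin> G \<longrightarrow> a x = 0"
    using a unfolding steinberg_carrier_def by auto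
  have "?K \<subseteq> \<Union>?U"
  proof
    fix x assume "x \<in> ?K"
    then show "x \<in> \<Union>?U"
      using closure_of_subset_topspace[of T ?S] compact_open_bisection_nbhd[of x G] by blast
  qed
  then obtain \<B> where \<B>: "finite \<B>" "\<B> \<subseteq> ?U" "?K \<subseteq> \<Union>\<B>"
    using K open_bisection_openin unfolding compactin_def by (smt (verit) mem_Collect_eq)
  have "{\<gamma>. a \<gamma> \<noteq> 0 \<and> h \<gamma> = v} \<subseteq> (\<Union>B\<in>\<B>. {\<gamma>\<in>B. h \<gamma> = v})"
  proof
    fix \<gamma> assume \<gamma>: "\<gamma> \<in> {\<gamma>. a \<gamma> \<noteq> 0 \<and> h \<gamma> = v}"
    then have "\<gamma> \<in> ?K" using z closure_of_subset[of ?S T] by auto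
    then show "\<gamma> \<in> (\<Union>B\<in>\<B>. {\<gamma>\<in>B. h \<gamma> = v})" using \<B>(3) \<gamma> by auto
  qed
  moreover have "finite {\<gamma>\<in>B. h \<gamma> = v}" if "B \<in> \<B>" for B
  proof -
    have "inj_on h B" using open_bisection_inj \<B> that h by blast
    then have "{\<gamma>\<in>B. h \<gamma> = v} \<subseteq> {} \<or> (\<exists>g. {\<gamma>\<in>B. h \<gamma> = v} \<subseteq> {g})"
      unfolding inj_on_def by blast
    then show ?thesis using finite_subset by blast
  qed
  ultimately show ?thesis using \<B>(1) finite_subset by blast
qed

end

section \<open>The convolution actions\<close>

context ample_Hausdorff_groupoid
begin

definition rfibre :: "('g \<Rightarrow> 'r::field) \<Rightarrow> 'g \<Rightarrow> 'g set" where
  "rfibre a v = {\<gamma> \<in> G. r \<gamma> = v \<and> a \<gamma> \<noteq> 0}"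

definition ltrans :: "('g \<Rightarrow> 'r::field) \<Rightarrow> 'g \<Rightarrow> 'g \<Rightarrow> 'r" where
  "ltrans a \<alpha> = (\<lambda>\<beta>. if \<beta> \<in> G \<and> r \<beta> = r \<alpha> then a (gmul (ginv \<alpha>) \<beta>) else 0)"

definition rconv :: "('g \<Rightarrow> 'r::field) \<Rightarrow> ('g \<Rightarrow> 'r) \<Rightarrow> 'g \<Rightarrow> 'r" where
  "rconv m a = (\<lambda>\<beta>. \<Sum>\<alpha>\<in>supp m. m \<alpha> * ltrans a \<alpha> \<beta>)"

definition unit_act :: "('g \<Rightarrow> 'r::field) \<Rightarrow> ('g \<Rightarrow> 'r) \<Rightarrow> 'g \<Rightarrow> 'r" where
  "unit_act a n = (\<lambda>v. \<Sum>\<gamma>\<in>rfibre a v. a \<gamma> * n (d \<gamma>))"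

definition pairing :: "('g \<Rightarrow> 'r::field) \<Rightarrow> ('g \<Rightarrow> 'r) \<Rightarrow> 'r" where
  "pairing m n = (\<Sum>\<alpha>\<in>supp m. m \<alpha> * n (d \<alpha>))"

lemma finite_rfibre: "a \<in> steinberg_carrier T \<Longrightarrow> finite (rfibre a v)"
  using finite_fibre[of a r v] unfolding rfibre_def by (auto elim: finite_subset[rotated])

lemma composable_rfibre: "\<alpha> \<in> G \<Longrightarrow> \<gamma> \<in> rfibre a (d \<alpha>) \<Longrightarrow> (\<alpha>, \<gamma>) \<in> G2"
  unfolding rfibre_def using composable_iff by auto

lemma convolution_eq:
  assumes a: "a \<in> steinberg_carrier T" and q: "q \<in> G"
  shows "convolution T G2 gmul a b q = (\<Sum>\<gamma>\<in>rfibre a (r q). a \<gamma> * b (gmul (ginv \<gamma>) q))"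
proof -
  let ?P = "{(\<alpha>, \<beta>). (\<alpha>, \<beta>) \<in> G2 \<and> gmul \<alpha> \<beta> = q \<and> a \<alpha> \<noteq> 0 \<and> b \<beta> \<noteq> 0}"
  let ?h = "\<lambda>\<gamma>. (\<gamma>, gmul (ginv \<gamma>) q)"
  let ?F = "{\<gamma> \<in> rfibre a (r q). b (gmul (ginv \<gamma>) q) \<noteq> 0}"
  have "?P \<subseteq> ?h ` ?F"
  proof
    fix p assume "p \<in> ?P"
    then obtain \<alpha> \<beta> where p: "p = (\<alpha>, \<beta>)" "(\<alpha>, \<beta>) \<in> G2" "gmul \<alpha> \<beta> = q" "a \<alpha> \<noteq> 0" "b \<beta> \<noteq> 0"
      by auto
    then have "\<beta> = gmul (ginv \<alpha>) q" "\<alpha> \<in> G" "r \<alpha> = r q"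
      using cancel_left composable_mem r_mul by auto
    then show "p \<in> ?h ` ?F" using p unfolding rfibre_def by auto
  qed
  moreover have "?h ` ?F \<subseteq> ?P"
  proof
    fix p assume "p \<in> ?h ` ?F"
    then obtain \<gamma> where \<gamma>: "p = ?h \<gamma>" "\<gamma> \<in> G" "r \<gamma> = r q" "a \<gamma> \<noteq> 0" "b (gmul (ginv \<gamma>) q) \<noteq> 0"
      unfolding rfibre_def by auto
    then have "(\<gamma>, gmul (ginv \<gamma>) q) \<in> G2" "gmul \<gamma> (gmul (ginv \<gamma>) q) = q"
      using composable_iff r_ldiv ldiv_mem mul_ldiv q by auto
    then show "p \<in> ?P" using \<gamma> by auto
  qed
  ultimately have P: "?P = ?h ` ?F" by (rule equalityI)
  have "convolution T G2 gmul a b q = (\<Sum>p\<in>?P. a (fst p) * b (snd p))"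
    using q unfolding convolution_def by simp
  also have "\<dots> = (\<Sum>\<gamma>\<in>?F. a \<gamma> * b (gmul (ginv \<gamma>) q))"
    unfolding P by (subst sum.reindex) (auto simp: inj_on_def)
  also have "\<dots> = (\<Sum>\<gamma>\<in>rfibre a (r q). a \<gamma> * b (gmul (ginv \<gamma>) q))"
    by (rule sum.mono_neutral_left) (use finite_rfibre[OF a] in auto)
  finally show ?thesis .
qed

lemma sum_ltrans:
  assumes \<alpha>: "\<alpha> \<in> G" and X: "finite X" "gmul \<alpha> ` rfibre a (d \<alpha>) \<subseteq> X"
  shows "(\<Sum>\<beta>\<in>X. ltrans a \<alpha> \<beta> * H \<beta>) = (\<Sum>\<gamma>\<in>rfibre a (d \<alpha>). a \<gamma> * H (gmul \<alpha> \<gamma>))"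
proof -
  have inj: "inj_on (gmul \<alpha>) (rfibre a (d \<alpha>))"
    using cancel_left composable_rfibre[OF \<alpha>] by (metis inj_onI)
  have ltrans_mul: "ltrans a \<alpha> (gmul \<alpha> \<gamma>) = a \<gamma>" if "\<gamma> \<in> rfibre a (d \<alpha>)" for \<gamma>
    using composable_rfibre[OF \<alpha> that] mul_mem r_mul cancel_left unfolding ltrans_def by auto
  have "(\<Sum>\<beta>\<in>X. ltrans a \<alpha> \<beta> * H \<beta>) = (\<Sum>\<beta>\<in>gmul \<alpha> ` rfibre a (d \<alpha>). ltrans a \<alpha> \<beta> * H \<beta>)"
  proof (rule sum.mono_neutral_right[OF X], rule ballI)
    fix \<beta> assume \<beta>: "\<beta> \<in> X - gmul \<alpha> ` rfibre a (d \<alpha>)"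
    show "ltrans a \<alpha> \<beta> * H \<beta> = 0"
    proof (cases "\<beta> \<in> G \<and> r \<beta> = r \<alpha> \<and> a (gmul (ginv \<alpha>) \<beta>) \<noteq> 0")
      case True
      then have "gmul (ginv \<alpha>) \<beta> \<in> rfibre a (d \<alpha>)" "gmul \<alpha> (gmul (ginv \<alpha>) \<beta>) = \<beta>"
        using ldiv_mem r_ldiv mul_ldiv \<alpha> unfolding rfibre_def by auto
      then show ?thesis using \<beta> by (metis Diff_iff imageI)
    next
      case False
      then have "ltrans a \<alpha> \<beta> = 0" unfolding ltrans_def by auto
      then show ?thesis by simp
    qed
  qed
  also have "\<dots> = (\<Sum>\<gamma>\<in>rfibre a (d \<alpha>). a \<gamma> * H (gmul \<alpha> \<gamma>))"
    by (simp add: sum.reindex[OF inj] ltrans_mul)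
  finally show ?thesis .
qed

lemma rconv_eq_sum: "finite X \<Longrightarrow> supp m \<subseteq> X \<Longrightarrow> rconv m a \<beta> = (\<Sum>\<alpha>\<in>X. m \<alpha> * ltrans a \<alpha> \<beta>)"
  unfolding rconv_def by (rule sum.mono_neutral_left) (auto simp: supp_def)

lemma pairing_eq_sum: "finite X \<Longrightarrow> supp m \<subseteq> X \<Longrightarrow> pairing m n = (\<Sum>\<alpha>\<in>X. m \<alpha> * n (d \<alpha>))"
  unfolding pairing_def by (rule sum.mono_neutral_left) (auto simp: supp_def)

lemma unit_act_eq_sum:
  "finite X \<Longrightarrow> rfibre a v \<subseteq> X \<Longrightarrow> X \<subseteq> {\<gamma>\<in>G. r \<gamma> = v} \<Longrightarrow>
    unit_act a n v = (\<Sum>\<gamma>\<in>X. a \<gamma> * n (d \<gamma>))"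
  unfolding unit_act_def by (rule sum.mono_neutral_left) (auto simp: rfibre_def)

lemma supp_add_subset: "supp (m + m' :: 'x \<Rightarrow> 'r::monoid_add) \<subseteq> supp m \<union> supp m'"
  by (auto simp: supp_def)

lemma rconv_add_left:
  assumes "finite (supp m)" "finite (supp m')"
  shows "rconv (m + m') a = rconv m a + rconv m' a"
proof
  fix \<beta>
  have X: "finite (supp m \<union> supp m')" using assms by simp
  show "rconv (m + m') a \<beta> = (rconv m a + rconv m' a) \<beta>"
    using rconv_eq_sum[OF X supp_add_subset] rconv_eq_sum[OF X, of m] rconv_eq_sum[OF X, of m']
    by (simp add: sum.distrib distrib_right)
qed

lemma rconv_add_right: "rconv m (\<lambda>x. a x + b x) = rconv m a + rconv m b"
  unfolding rconv_def plus_fun_def sum.distrib[symmetric]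
  by (intro ext sum.cong) (auto simp: ltrans_def distrib_left)

lemma pairing_add_left:
  assumes "finite (supp m)" "finite (supp m')"
  shows "pairing (m + m') n = pairing m n + pairing m' n"
proof -
  have X: "finite (supp m \<union> supp m')" using assms by simp
  show ?thesis
    using pairing_eq_sum[OF X supp_add_subset] pairing_eq_sum[OF X, of m] pairing_eq_sum[OF X, of m']
    by (simp add: sum.distrib distrib_right)
qed

lemma pairing_add_right: "pairing m (n + n') = pairing m n + pairing m n'"
  unfolding pairing_def by (simp add: sum.distrib distrib_left)

lemma unit_act_add_left:
  assumes "a \<in> steinberg_carrier T" "b \<in> steinberg_carrier T"
  shows "unit_act (\<lambda>x. a x + b x) n = unit_act a n + unit_act b n"
proof
  fix v
  have X: "finite (rfibre a v \<union> rfibre b v)"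
    using finite_rfibre[OF assms(1)] finite_rfibre[OF assms(2)] by simp
  have range: "rfibre a v \<union> rfibre b v \<subseteq> {\<gamma>\<in>G. r \<gamma> = v}" by (auto simp: rfibre_def)
  have "rfibre (\<lambda>x. a x + b x) v \<subseteq> rfibre a v \<union> rfibre b v" by (auto simp: rfibre_def)
  then have "unit_act (\<lambda>x. a x + b x) n v = (\<Sum>\<gamma>\<in>rfibre a v \<union> rfibre b v. (a \<gamma> + b \<gamma>) * n (d \<gamma>))"
    by (rule unit_act_eq_sum[OF X _ range])
  moreover have "unit_act a n v = (\<Sum>\<gamma>\<in>rfibre a v \<union> rfibre b v. a \<gamma> * n (d \<gamma>))"
    and "unit_act b n v = (\<Sum>\<gamma>\<in>rfibre a v \<union> rfibre b v. b \<gamma> * n (d \<gamma>))"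
    by (rule unit_act_eq_sum[OF X _ range]; auto)+
  ultimately show "unit_act (\<lambda>x. a x + b x) n v = (unit_act a n + unit_act b n) v"
    by (simp add: sum.distrib distrib_right)
qed

lemma unit_act_add_right: "unit_act a (n + n') = unit_act a n + unit_act a n'"
  unfolding unit_act_def by (simp add: fun_eq_iff sum.distrib distrib_left)

definition translates :: "('g \<Rightarrow> 'r::field) \<Rightarrow> ('g \<Rightarrow> 'r) \<Rightarrow> 'g set" where
  "translates m a = (\<lambda>(\<alpha>, \<gamma>). gmul \<alpha> \<gamma>) ` (SIGMA \<alpha>:supp m. rfibre a (d \<alpha>))"

lemma finite_translates:
  "finite (supp m) \<Longrightarrow> a \<in> steinberg_carrier T \<Longrightarrow> finite (translates m a)"
  unfolding translates_def by (intro finite_imageI finite_SigmaI) (simp_all add: finite_rfibre)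

lemma translates_subset: "\<alpha> \<in> supp m \<Longrightarrow> gmul \<alpha> ` rfibre a (d \<alpha>) \<subseteq> translates m a"
  unfolding translates_def by force

lemma supp_rconv:
  assumes "supp m \<subseteq> G"
  shows "supp (rconv m a) \<subseteq> translates m a"
proof
  fix \<beta> assume "\<beta> \<in> supp (rconv m a)"
  then have "(\<Sum>\<alpha>\<in>supp m. m \<alpha> * ltrans a \<alpha> \<beta>) \<noteq> 0" unfolding rconv_def supp_def by simp
  then obtain \<alpha> where \<alpha>: "\<alpha> \<in> supp m" "m \<alpha> * ltrans a \<alpha> \<beta> \<noteq> 0"
    by (rule sum.not_neutral_contains_not_neutral)
  then have "\<alpha> \<in> G" "\<beta> \<in> G" "r \<beta> = r \<alpha>" "a (gmul (ginv \<alpha>) \<beta>) \<noteq> 0"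
    using assms unfolding ltrans_def by (auto split: if_splits)
  then have "gmul (ginv \<alpha>) \<beta> \<in> rfibre a (d \<alpha>)" "gmul \<alpha> (gmul (ginv \<alpha>) \<beta>) = \<beta>"
    using ldiv_mem r_ldiv mul_ldiv unfolding rfibre_def by auto
  then show "\<beta> \<in> translates m a" using translates_subset[OF \<alpha>(1), of a] by (metis image_subset_iff)
qed

lemma ltrans_convolution:
  assumes a: "a \<in> steinberg_carrier T" and \<alpha>: "\<alpha> \<in> G"
  shows "ltrans (convolution T G2 gmul a b) \<alpha> \<beta> = (\<Sum>\<gamma>\<in>rfibre a (d \<alpha>). a \<gamma> * ltrans b (gmul \<alpha> \<gamma>) \<beta>)"
proof (cases "\<beta> \<in> G \<and> r \<beta> = r \<alpha>")
  case True
  have q: "gmul (ginv \<alpha>) \<beta> \<in> G" "r (gmul (ginv \<alpha>) \<beta>) = d \<alpha>" using ldiv_mem r_ldiv True \<alpha> by auto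
  have "ltrans (convolution T G2 gmul a b) \<alpha> \<beta> = convolution T G2 gmul a b (gmul (ginv \<alpha>) \<beta>)"
    using True unfolding ltrans_def by simp
  also have "\<dots> = (\<Sum>\<gamma>\<in>rfibre a (d \<alpha>). a \<gamma> * b (gmul (ginv \<gamma>) (gmul (ginv \<alpha>) \<beta>)))"
    using convolution_eq[OF a q(1)] q(2) by simp
  also have "\<dots> = (\<Sum>\<gamma>\<in>rfibre a (d \<alpha>). a \<gamma> * ltrans b (gmul \<alpha> \<gamma>) \<beta>)"
  proof (rule sum.cong[OF refl])
    fix \<gamma> assume "\<gamma> \<in> rfibre a (d \<alpha>)"
    then have c: "(\<alpha>, \<gamma>) \<in> G2" using composable_rfibre \<alpha> by blast
    then have "ltrans b (gmul \<alpha> \<gamma>) \<beta> = b (gmul (ginv \<gamma>) (gmul (ginv \<alpha>) \<beta>))"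
      using True r_mul[OF c] ldiv_mul[OF c] unfolding ltrans_def by simp
    then show "a \<gamma> * b (gmul (ginv \<gamma>) (gmul (ginv \<alpha>) \<beta>)) = a \<gamma> * ltrans b (gmul \<alpha> \<gamma>) \<beta>"
      by simp
  qed
  finally show ?thesis .
next
  case False
  have "ltrans b (gmul \<alpha> \<gamma>) \<beta> = 0" if "\<gamma> \<in> rfibre a (d \<alpha>)" for \<gamma>
    using False r_mul[OF composable_rfibre[OF \<alpha> that]] unfolding ltrans_def by auto
  then show ?thesis using False unfolding ltrans_def by auto
qed

lemma rconv_convolution:
  assumes m: "finite (supp m)" "supp m \<subseteq> G"
    and a: "a \<in> steinberg_carrier T" and b: "b \<in> steinberg_carrier T"
  shows "rconv m (convolution T G2 gmul a b) = rconv (rconv m a) b"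
proof
  fix \<beta>
  have X: "finite (translates m a)" using finite_translates m a by blast
  have "rconv (rconv m a) b \<beta> = (\<Sum>p\<in>translates m a. rconv m a p * ltrans b p \<beta>)"
    by (rule rconv_eq_sum[OF X supp_rconv[OF m(2)]])
  also have "\<dots> = (\<Sum>\<alpha>\<in>supp m. m \<alpha> * (\<Sum>p\<in>translates m a. ltrans a \<alpha> p * ltrans b p \<beta>))"
    unfolding rconv_def
    by (simp add: sum_distrib_right sum_distrib_left mult.assoc sum.swap[of _ "translates m a"])
  also have "\<dots> = rconv m (convolution T G2 gmul a b) \<beta>"
    unfolding rconv_def
    using sum_ltrans[OF _ X translates_subset] ltrans_convolution[OF a] m(2)
    by (intro sum.cong) auto
  finally show "rconv m (convolution T G2 gmul a b) \<beta> = rconv (rconv m a) b \<beta>" ..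
qed

lemma pairing_balanced:
  assumes m: "finite (supp m)" "supp m \<subseteq> G" and a: "a \<in> steinberg_carrier T"
  shows "pairing (rconv m a) n = pairing m (unit_act a n)"
proof -
  have X: "finite (translates m a)" using finite_translates m a by blast
  have "pairing (rconv m a) n = (\<Sum>p\<in>translates m a. rconv m a p * n (d p))"
    by (rule pairing_eq_sum[OF X supp_rconv[OF m(2)]])
  also have "\<dots> = (\<Sum>\<alpha>\<in>supp m. m \<alpha> * (\<Sum>p\<in>translates m a. ltrans a \<alpha> p * n (d p)))"
    unfolding rconv_def
    by (simp add: sum_distrib_right sum_distrib_left mult.assoc sum.swap[of _ "translates m a"])
  also have "\<dots> = (\<Sum>\<alpha>\<in>supp m. m \<alpha> * unit_act a n (d \<alpha>))"
  proof (rule sum.cong[OF refl])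
    fix \<alpha> assume \<alpha>: "\<alpha> \<in> supp m"
    then have \<alpha>G: "\<alpha> \<in> G" using m by blast
    have "(\<Sum>p\<in>translates m a. ltrans a \<alpha> p * n (d p)) =
        (\<Sum>\<gamma>\<in>rfibre a (d \<alpha>). a \<gamma> * n (d (gmul \<alpha> \<gamma>)))"
      by (rule sum_ltrans[OF \<alpha>G X translates_subset[OF \<alpha>]])
    also have "\<dots> = unit_act a n (d \<alpha>)"
      unfolding unit_act_def by (intro sum.cong refl) (simp add: d_mul composable_rfibre[OF \<alpha>G])
    finally show "m \<alpha> * (\<Sum>p\<in>translates m a. ltrans a \<alpha> p * n (d p)) = m \<alpha> * unit_act a n (d \<alpha>)"
      by simp
  qed
  finally show ?thesis unfolding pairing_def .
qed

definition products :: "('g \<Rightarrow> 'r::field) \<Rightarrow> ('g \<Rightarrow> 'r) \<Rightarrow> 'g \<Rightarrow> 'g set" where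
  "products a b v = (\<lambda>(\<xi>, \<eta>). gmul \<xi> \<eta>) ` (SIGMA \<xi>:rfibre a v. rfibre b (d \<xi>))"

lemma finite_products:
  "a \<in> steinberg_carrier T \<Longrightarrow> b \<in> steinberg_carrier T \<Longrightarrow> finite (products a b v)"
  unfolding products_def by (intro finite_imageI finite_SigmaI) (simp_all add: finite_rfibre)

lemma products_subset: "\<xi> \<in> rfibre a v \<Longrightarrow> gmul \<xi> ` rfibre b (d \<xi>) \<subseteq> products a b v"
  unfolding products_def by force

lemma products_range: "products a b v \<subseteq> {\<gamma> \<in> G. r \<gamma> = v}"
proof
  fix \<gamma> assume "\<gamma> \<in> products a b v"
  then obtain \<xi> \<eta> where \<gamma>: "\<gamma> = gmul \<xi> \<eta>" "\<xi> \<in> rfibre a v" "\<eta> \<in> rfibre b (d \<xi>)"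
    unfolding products_def by auto
  then have "(\<xi>, \<eta>) \<in> G2" using composable_rfibre unfolding rfibre_def by blast
  then show "\<gamma> \<in> {\<gamma> \<in> G. r \<gamma> = v}" using mul_mem r_mul \<gamma> unfolding rfibre_def by auto
qed

lemma rfibre_convolution:
  assumes a: "a \<in> steinberg_carrier T"
  shows "rfibre (convolution T G2 gmul a b) v \<subseteq> products a b v"
proof
  fix \<gamma> assume "\<gamma> \<in> rfibre (convolution T G2 gmul a b) v"
  then have \<gamma>: "\<gamma> \<in> G" "r \<gamma> = v" "convolution T G2 gmul a b \<gamma> \<noteq> 0" unfolding rfibre_def by auto
  then have "(\<Sum>\<xi>\<in>rfibre a v. a \<xi> * b (gmul (ginv \<xi>) \<gamma>)) \<noteq> 0" using convolution_eq[OF a] by simp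
  then obtain \<xi> where \<xi>: "\<xi> \<in> rfibre a v" "a \<xi> * b (gmul (ginv \<xi>) \<gamma>) \<noteq> 0"
    by (rule sum.not_neutral_contains_not_neutral)
  then have "gmul (ginv \<xi>) \<gamma> \<in> rfibre b (d \<xi>)" "gmul \<xi> (gmul (ginv \<xi>) \<gamma>) = \<gamma>"
    using ldiv_mem r_ldiv mul_ldiv \<gamma> unfolding rfibre_def by auto
  then show "\<gamma> \<in> products a b v" using products_subset[OF \<xi>(1), of b] by (metis image_subset_iff)
qed

lemma unit_act_convolution:
  assumes a: "a \<in> steinberg_carrier T" and b: "b \<in> steinberg_carrier T"
  shows "unit_act (convolution T G2 gmul a b) n = unit_act a (unit_act b n)"
proof
  fix v
  have X: "finite (products a b v)" using finite_products a b by blast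
  have "unit_act (convolution T G2 gmul a b) n v =
      (\<Sum>\<gamma>\<in>products a b v. convolution T G2 gmul a b \<gamma> * n (d \<gamma>))"
    by (rule unit_act_eq_sum[OF X rfibre_convolution[OF a] products_range])
  also have "\<dots> = (\<Sum>\<gamma>\<in>products a b v. \<Sum>\<xi>\<in>rfibre a v. a \<xi> * (ltrans b \<xi> \<gamma> * n (d \<gamma>)))"
  proof (rule sum.cong[OF refl])
    fix \<gamma> assume "\<gamma> \<in> products a b v"
    then have \<gamma>: "\<gamma> \<in> G" "r \<gamma> = v" using products_range by auto
    have "convolution T G2 gmul a b \<gamma> = (\<Sum>\<xi>\<in>rfibre a v. a \<xi> * ltrans b \<xi> \<gamma>)"
      unfolding convolution_eq[OF a \<gamma>(1)] \<gamma>(2)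
      by (rule sum.cong[OF refl]) (use \<gamma> in \<open>auto simp: ltrans_def rfibre_def\<close>)
    then show "convolution T G2 gmul a b \<gamma> * n (d \<gamma>) =
        (\<Sum>\<xi>\<in>rfibre a v. a \<xi> * (ltrans b \<xi> \<gamma> * n (d \<gamma>)))"
      by (simp add: sum_distrib_right mult.assoc)
  qed
  also have "\<dots> = (\<Sum>\<xi>\<in>rfibre a v. a \<xi> * (\<Sum>\<gamma>\<in>products a b v. ltrans b \<xi> \<gamma> * n (d \<gamma>)))"
    by (subst sum.swap) (simp add: sum_distrib_left)
  also have "\<dots> = (\<Sum>\<xi>\<in>rfibre a v. a \<xi> * unit_act b n (d \<xi>))"
  proof (rule sum.cong[OF refl])
    fix \<xi> assume \<xi>: "\<xi> \<in> rfibre a v"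
    then have \<xi>G: "\<xi> \<in> G" unfolding rfibre_def by auto
    have "(\<Sum>\<gamma>\<in>products a b v. ltrans b \<xi> \<gamma> * n (d \<gamma>)) =
        (\<Sum>\<eta>\<in>rfibre b (d \<xi>). b \<eta> * n (d (gmul \<xi> \<eta>)))"
      by (rule sum_ltrans[OF \<xi>G X products_subset[OF \<xi>]])
    also have "\<dots> = unit_act b n (d \<xi>)"
      unfolding unit_act_def by (intro sum.cong refl) (simp add: d_mul composable_rfibre[OF \<xi>G])
    finally show "a \<xi> * (\<Sum>\<gamma>\<in>products a b v. ltrans b \<xi> \<gamma> * n (d \<gamma>)) = a \<xi> * unit_act b n (d \<xi>)"
      by simp
  qed
  finally show "unit_act (convolution T G2 gmul a b) n v = unit_act a (unit_act b n) v"
    by (simp add: unit_act_def)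
qed

lemma rconv_indicator:
  assumes W: "W \<subseteq> G0" and m: "finite (supp m)" "supp m \<subseteq> G" "d ` supp m \<subseteq> W"
  shows "rconv m (indicator W) = m"
proof
  fix \<beta>
  have "m \<alpha> * ltrans (indicator W) \<alpha> \<beta> = (if \<alpha> = \<beta> then m \<beta> else 0)" if \<alpha>: "\<alpha> \<in> supp m" for \<alpha>
  proof (cases "\<beta> \<in> G \<and> r \<beta> = r \<alpha> \<and> gmul (ginv \<alpha>) \<beta> \<in> W")
    case True
    have \<alpha>G: "\<alpha> \<in> G" using \<alpha> m by blast
    then have "(\<alpha>, gmul (ginv \<alpha>) \<beta>) \<in> G2" using composable_iff True ldiv_mem r_ldiv by auto
    then have "\<beta> = \<alpha>" using mul_ldiv[of \<alpha> \<beta>] unit_mul_right True W \<alpha>G by auto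
    then show ?thesis using True unfolding ltrans_def by simp
  next
    case False
    have "\<alpha> \<in> G" "gmul (ginv \<alpha>) \<alpha> \<in> W" using \<alpha> m by (auto simp: gdom_def)
    then have "\<alpha> \<noteq> \<beta>" using False by auto
    then show ?thesis using False unfolding ltrans_def by auto
  qed
  then have "rconv m (indicator W) \<beta> = (\<Sum>\<alpha>\<in>supp m. if \<alpha> = \<beta> then m \<beta> else 0)"
    unfolding rconv_def by (intro sum.cong) simp_all
  also have "\<dots> = m \<beta>" using m(1) by (simp add: supp_def)
  finally show "rconv m (indicator W) \<beta> = m \<beta>" .
qed

lemma unit_act_indicator_units:
  assumes "W \<subseteq> G0"
  shows "unit_act (\<lambda>x. c * indicator W x) n v = (if v \<in> W then c * n v else 0)"
proof (cases "c = 0")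
  case False
  then have "rfibre (\<lambda>x. c * indicator W x) v = (if v \<in> W then {v} else {})"
    using assms unit_r unit_space_iff unfolding rfibre_def by (auto simp: indicator_def)
  moreover have "v \<in> W \<Longrightarrow> d v = v" using assms unit_space_iff by auto
  ultimately show ?thesis unfolding unit_act_def by simp
qed (simp add: unit_act_def rfibre_def)

lemma unit_act_indicator_bisection:
  assumes B: "inj_on d B" "B \<subseteq> G" and \<gamma>: "\<gamma> \<in> B" "d \<gamma> = w"
    and c: "(\<lambda>x. c * indicator B x) \<in> steinberg_carrier T"
  shows "unit_act (\<lambda>x. c * indicator B x) (pointmass w k) = pointmass (r \<gamma>) (c * k)"
proof (cases "c = 0")
  case False
  show ?thesis
  proof
    fix v
    have "unit_act (\<lambda>x. c * indicator B x) (pointmass w k) v =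
        (\<Sum>\<gamma>'\<in>{\<gamma>' \<in> rfibre (\<lambda>x. c * indicator B x) v. d \<gamma>' = w}. c * k)"
      unfolding unit_act_def using finite_rfibre[OF c]
      by (subst sum.inter_filter) (auto simp: rfibre_def indicator_def pointmass_def intro!: sum.cong)
    also have "{\<gamma>' \<in> rfibre (\<lambda>x. c * indicator B x) v. d \<gamma>' = w} = (if v = r \<gamma> then {\<gamma>} else {})"
      using B \<gamma> False unfolding rfibre_def inj_on_def by (auto simp: indicator_def)
    finally show "unit_act (\<lambda>x. c * indicator B x) (pointmass w k) v = pointmass (r \<gamma>) (c * k) v"
      by (simp add: pointmass_def)
  qed
qed (simp add: unit_act_def rfibre_def pointmass_def fun_eq_iff)

lemma rconv_pointmass_unit:
  fixes a :: "'g \<Rightarrow> 'r::field"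
  assumes v: "v \<in> G0"
  shows "rconv (pointmass v 1) a = (\<lambda>\<beta>. if \<beta> \<in> G \<and> r \<beta> = v then a \<beta> else 0)"
proof
  fix \<beta>
  have "supp (pointmass v (1 :: 'r)) = {v}" by (auto simp: supp_def pointmass_def)
  then have "rconv (pointmass v 1) a \<beta> = ltrans a v \<beta>" by (simp add: rconv_def pointmass_def)
  moreover have "gmul v \<beta> = \<beta>" if "\<beta> \<in> G" "r \<beta> = v"
    using that unit_mul_left[OF v] composable_iff unit_space_iff v by auto
  ultimately show "rconv (pointmass v 1) a \<beta> = (if \<beta> \<in> G \<and> r \<beta> = v then a \<beta> else 0)"
    using unit_r[OF v] unit_inv[OF v] by (simp add: ltrans_def)
qed

end

context ample_Hausdorff_groupoid
begin

abbreviation "A \<equiv> steinberg_algebra T G2 gmul"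

lemma steinberg_algebra_simps:
  "rcarr A = steinberg_carrier T" "radd A = (\<lambda>f g x. f x + g x)" "rmul A = convolution T G2 gmul"
  by (simp_all add: steinberg_algebra_def)

lemma local_unit_rconv:
  assumes "finite (supp m)" "supp m \<subseteq> G"
  shows "\<exists>a\<in>steinberg_carrier T. rconv m a = (m :: 'g \<Rightarrow> 'r::field)"
proof -
  obtain W where W: "compactin T W" "openin T W" "d ` supp m \<subseteq> W" "W \<subseteq> G0"
    using finite_units_compact_open_nbhd[of "d ` supp m"] assms d_unit by blast
  have "(indicator W :: 'g \<Rightarrow> 'r) \<in> steinberg_carrier T"
    using scaled_indicator_steinberg[OF Hausdorff W(1,2), of 1] by simp
  then show ?thesis using rconv_indicator[OF W(4) assms W(3)] by blast
qed

lemma right_function_module_rfibre: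
  "right_function_module A (fin_funs {\<beta> \<in> G. r \<beta> = v}) (rconv :: ('g \<Rightarrow> 'r::field) \<Rightarrow> _)"
proof
  fix m a :: "'g \<Rightarrow> 'r"
  assume m: "m \<in> fin_funs {\<beta> \<in> G. r \<beta> = v}" and a: "a \<in> rcarr A"
  have "translates m a \<subseteq> {\<beta> \<in> G. r \<beta> = v}"
  proof
    fix \<beta> assume "\<beta> \<in> translates m a"
    then obtain \<alpha> \<gamma> where \<beta>: "\<beta> = gmul \<alpha> \<gamma>" "\<alpha> \<in> supp m" "\<gamma> \<in> rfibre a (d \<alpha>)"
      unfolding translates_def by auto
    then have "\<alpha> \<in> G" "r \<alpha> = v" using m by (auto simp: fin_funs_def)
    then have "(\<alpha>, \<gamma>) \<in> G2" "r \<alpha> = v" using composable_rfibre \<beta>(3) by auto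
    then show "\<beta> \<in> {\<beta> \<in> G. r \<beta> = v}" using mul_mem r_mul \<beta>(1) by auto
  qed
  moreover have "supp (rconv m a) \<subseteq> translates m a"
    using m by (intro supp_rconv) (auto simp: fin_funs_def)
  moreover have "finite (translates m a)"
    using m a by (intro finite_translates) (auto simp: fin_funs_def steinberg_algebra_simps)
  ultimately show "rconv m a \<in> fin_funs {\<beta> \<in> G. r \<beta> = v}"
    unfolding fin_funs_def by (auto intro: finite_subset)
next
  fix m m' a :: "'g \<Rightarrow> 'r"
  assume "m \<in> fin_funs {\<beta> \<in> G. r \<beta> = v}" "m' \<in> fin_funs {\<beta> \<in> G. r \<beta> = v}"
  then show "rconv (m + m') a = rconv m a + rconv m' a"
    by (intro rconv_add_left) (auto simp: fin_funs_def)
next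
  fix m a b :: "'g \<Rightarrow> 'r"
  assume "m \<in> fin_funs {\<beta> \<in> G. r \<beta> = v}" "a \<in> rcarr A" "b \<in> rcarr A"
  then show "rconv m (rmul A a b) = rconv (rconv m a) b"
    by (auto simp: fin_funs_def steinberg_algebra_simps intro: rconv_convolution)
qed (simp_all add: zero_fin_funs diff_fin_funs steinberg_algebra_simps rconv_add_right)

definition orbit :: "'g \<Rightarrow> 'g set" where
  "orbit v = r ` {\<gamma> \<in> G. d \<gamma> = v}"

lemma orbit_units: "orbit v \<subseteq> G0"
  unfolding orbit_def using r_unit by auto

lemma local_unit_unit_act:
  assumes "finite (supp n)" "supp n \<subseteq> G0"
  shows "\<exists>a\<in>steinberg_carrier T. unit_act a n = (n :: 'g \<Rightarrow> 'r::field)"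
proof -
  obtain W where W: "compactin T W" "openin T W" "supp n \<subseteq> W" "W \<subseteq> G0"
    using finite_units_compact_open_nbhd assms by blast
  have "unit_act (indicator W) n w = n w" for w
    using unit_act_indicator_units[OF W(4), of "1 :: 'r" n w] W(3) by (auto simp: supp_def)
  then have "unit_act (indicator W) n = n" ..
  moreover have "(indicator W :: 'g \<Rightarrow> 'r) \<in> steinberg_carrier T"
    using scaled_indicator_steinberg[OF Hausdorff W(1,2), of 1] by simp
  ultimately show ?thesis by blast
qed

lemma left_function_module_orbit:
  "left_function_module A (fin_funs (orbit v)) (unit_act :: ('g \<Rightarrow> 'r::field) \<Rightarrow> _)"
proof
  fix n a :: "'g \<Rightarrow> 'r"
  assume n: "n \<in> fin_funs (orbit v)" and "a \<in> rcarr A"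
  then have a: "a \<in> steinberg_carrier T" by (simp add: steinberg_algebra_simps)
  let ?Y = "r ` (\<Union>w\<in>supp n. {\<gamma>. a \<gamma> \<noteq> 0 \<and> d \<gamma> = w})"
  have "finite ?Y" using n finite_fibre[OF a] by (auto simp: fin_funs_def)
  moreover have "supp (unit_act a n) \<subseteq> ?Y \<inter> orbit v"
  proof
    fix w assume "w \<in> supp (unit_act a n)"
    then have "(\<Sum>\<gamma>\<in>rfibre a w. a \<gamma> * n (d \<gamma>)) \<noteq> 0" unfolding supp_def unit_act_def by simp
    then obtain \<gamma> where \<gamma>: "\<gamma> \<in> rfibre a w" "a \<gamma> * n (d \<gamma>) \<noteq> 0"
      by (rule sum.not_neutral_contains_not_neutral)
    then have \<gamma>': "\<gamma> \<in> G" "r \<gamma> = w" "a \<gamma> \<noteq> 0" "d \<gamma> \<in> supp n"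
      unfolding rfibre_def supp_def by auto
    then obtain \<gamma>' where "d \<gamma> = r \<gamma>'" "\<gamma>' \<in> G" "d \<gamma>' = v"
      using n unfolding fin_funs_def orbit_def by blast
    then have "(\<gamma>, \<gamma>') \<in> G2" "w = r (gmul \<gamma> \<gamma>')" "d (gmul \<gamma> \<gamma>') = v"
      using composable_iff \<gamma>' r_mul d_mul by auto
    then have "w \<in> orbit v" using mul_mem unfolding orbit_def by blast
    then show "w \<in> ?Y \<inter> orbit v" using \<gamma>' by blast
  qed
  ultimately show "unit_act a n \<in> fin_funs (orbit v)"
    unfolding fin_funs_def by (auto intro: finite_subset)
qed (simp_all add: steinberg_algebra_simps zero_fin_funs diff_fin_funs
    unit_act_add_left unit_act_add_right unit_act_convolution)

end

section \<open>Graded isotropy obstructs flatness\<close>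

lemma translation_invariant_finite_imp_zero:
  fixes g :: "'c::{group_add,linorder}"
  assumes "totally_ordered_group TYPE('c)" and S: "S \<noteq> {}" "finite S"
    and invariant: "\<And>s. s \<in> S \<Longrightarrow> g + s \<in> S"
  shows "g = 0"
proof (rule ccontr)
  have mono: "a \<le> b \<Longrightarrow> a + z \<le> b + z" for a b z :: 'c
    using assms(1) unfolding totally_ordered_group_def by blast
  assume "g \<noteq> 0"
  then consider "0 < g" | "g < 0" by fastforce
  then obtain s where "g + s = s"
  proof cases
    case 1
    have "g + Max S \<le> Max S" using Max_ge[OF S(2) invariant] Max_in[OF S(2,1)] by blast
    moreover have "0 + Max S \<le> g + Max S" using mono[of 0 g "Max S"] 1 by simp
    ultimately show thesis using that[of "Max S"] by simp
  next
    case 2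
    have "Min S \<le> g + Min S" using Min_le[OF S(2) invariant] Min_in[OF S(2,1)] by blast
    moreover have "g + Min S \<le> 0 + Min S" using mono[of g 0 "Min S"] 2 by simp
    ultimately show thesis using that[of "Min S"] by simp
  qed
  then have "g + s = 0 + s" by simp
  with \<open>g \<noteq> 0\<close> show False by (simp only: add_right_cancel)
qed

locale isotropy_arrow = ample_Hausdorff_groupoid T G2 gmul ginv
  for T :: "'g topology" and G2 :: "('g \<times> 'g) set"
    and gmul :: "'g \<Rightarrow> 'g \<Rightarrow> 'g" and ginv :: "'g \<Rightarrow> 'g" +
  fixes u x :: 'g
  assumes isotropy: "x \<in> isotropy T gmul ginv u"
begin

sublocale M: right_function_module A "fin_funs {\<beta> \<in> G. r \<beta> = u}" rconv
  by (rule right_function_module_rfibre)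

sublocale N: left_function_module A "fin_funs (orbit u)" unit_act
  by (rule left_function_module_orbit)

lemma x_mem: "x \<in> G" "d x = u" "r x = u"
  using isotropy unfolding isotropy_def by auto

lemma u_unit: "u \<in> G0"
  using d_unit x_mem by metis

lemma composable_x: "\<alpha> \<in> G \<Longrightarrow> r \<alpha> = u \<Longrightarrow> (x, \<alpha>) \<in> G2"
  using composable_iff x_mem by auto

lemma ltrans_x_mul:
  assumes "\<alpha> \<in> G" "r \<alpha> = u"
  shows "ltrans m x (gmul x \<alpha>) = m \<alpha>"
proof -
  have c: "(x, \<alpha>) \<in> G2" using composable_x assms by blast
  then have "gmul x \<alpha> \<in> G" "r (gmul x \<alpha>) = r x" "gmul (ginv x) (gmul x \<alpha>) = \<alpha>"
    using mul_mem r_mul cancel_left by auto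
  then show ?thesis unfolding ltrans_def by simp
qed

lemma supp_ltrans_x:
  assumes m: "m \<in> fin_funs {\<beta> \<in> G. r \<beta> = u}"
  shows "supp (ltrans m x) \<subseteq> gmul x ` supp m"
proof
  fix \<beta> assume "\<beta> \<in> supp (ltrans m x)"
  then have \<beta>: "\<beta> \<in> G" "r \<beta> = r x" "gmul (ginv x) \<beta> \<in> supp m"
    unfolding supp_def ltrans_def by (auto split: if_splits)
  moreover have "gmul x (gmul (ginv x) \<beta>) = \<beta>" using mul_ldiv x_mem \<beta> by blast
  ultimately show "\<beta> \<in> gmul x ` supp m" by (metis imageI)
qed

lemma ltrans_x_fin_funs:
  assumes m: "m \<in> fin_funs {\<beta> \<in> G. r \<beta> = u}"
  shows "ltrans m x \<in> fin_funs {\<beta> \<in> G. r \<beta> = u}"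
proof -
  have "supp (ltrans m x) \<subseteq> {\<beta> \<in> G. r \<beta> = u}" using x_mem unfolding supp_def ltrans_def by auto
  then show ?thesis using supp_ltrans_x[OF m] m unfolding fin_funs_def by (auto intro: finite_subset)
qed

lemma ltrans_x_rconv:
  assumes m: "m \<in> fin_funs {\<beta> \<in> G. r \<beta> = u}" and a: "a \<in> steinberg_carrier T"
  shows "ltrans (rconv m a) x = rconv (ltrans m x) a"
proof
  fix \<beta>
  have mu: "\<alpha> \<in> G" "r \<alpha> = u" if "\<alpha> \<in> supp m" for \<alpha> using that m by (auto simp: fin_funs_def)
  have inj: "inj_on (gmul x) (supp m)"
    by (rule inj_onI) (metis cancel_left composable_x mu)
  have "rconv (ltrans m x) a \<beta> = (\<Sum>\<alpha>'\<in>gmul x ` supp m. ltrans m x \<alpha>' * ltrans a \<alpha>' \<beta>)"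
    using supp_ltrans_x[OF m] m by (intro rconv_eq_sum) (auto simp: fin_funs_def)
  also have "\<dots> = (\<Sum>\<alpha>\<in>supp m. m \<alpha> * ltrans a (gmul x \<alpha>) \<beta>)"
    by (simp add: sum.reindex[OF inj] ltrans_x_mul mu)
  also have "\<dots> = ltrans (rconv m a) x \<beta>"
  proof (cases "\<beta> \<in> G \<and> r \<beta> = u")
    case True
    have "ltrans a (gmul x \<alpha>) \<beta> = ltrans a \<alpha> (gmul (ginv x) \<beta>)" if "\<alpha> \<in> supp m" for \<alpha>
    proof -
      have c: "(x, \<alpha>) \<in> G2" using composable_x mu that by blast
      then show ?thesis
        using True r_mul[OF c] ldiv_mul[OF c] ldiv_mem r_ldiv x_mem mu[OF that]
        unfolding ltrans_def by auto
    qed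
    then show ?thesis using True x_mem unfolding ltrans_def[of "rconv m a"] by (simp add: rconv_def)
  next
    case False
    have "ltrans a (gmul x \<alpha>) \<beta> = 0" if "\<alpha> \<in> supp m" for \<alpha>
      using False r_mul[OF composable_x] mu[OF that] x_mem unfolding ltrans_def by auto
    then show ?thesis using False x_mem unfolding ltrans_def[of "rconv m a"] by auto
  qed
  finally show "ltrans (rconv m a) x \<beta> = rconv (ltrans m x) a \<beta>" ..
qed

lemma ltrans_diff: "ltrans (m - m') x = ltrans m x - ltrans m' x"
  by (auto simp: ltrans_def fun_eq_iff)

lemma ltrans_x_fixed_imp_zero:
  fixes c :: "'g \<Rightarrow> 'c::{group_add,linorder}"
  assumes tog: "totally_ordered_group TYPE('c)" and grading: "grading T G2 gmul c"
    and cx: "c x \<noteq> 0" and m: "m \<in> fin_funs {\<beta> \<in> G. r \<beta> = u}" and fixed: "ltrans m x = m"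
  shows "m = 0"
proof (rule ccontr)
  assume "m \<noteq> 0"
  then have "c ` supp m \<noteq> {}" by (auto simp: supp_def fun_eq_iff)
  moreover have "finite (c ` supp m)" using m by (simp add: fin_funs_def)
  moreover have "c x + s \<in> c ` supp m" if s: "s \<in> c ` supp m" for s
  proof -
    obtain \<alpha> where \<alpha>: "\<alpha> \<in> supp m" "s = c \<alpha>" using s by blast
    then have "\<alpha> \<in> G" "r \<alpha> = u" using m by (auto simp: fin_funs_def)
    then have "c (gmul x \<alpha>) = c x + c \<alpha>" "m (gmul x \<alpha>) = m \<alpha>"
      using grading composable_x ltrans_x_mul[of \<alpha> m] fixed unfolding grading_def by auto
    then show ?thesis using \<alpha> by (metis imageI mem_Collect_eq supp_def)
  qed
  ultimately have "c x = 0" by (rule translation_invariant_finite_imp_zero[OF tog])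
  with cx show False ..
qed

definition id_minus_shift :: "('g \<Rightarrow> 'r::field) \<Rightarrow> 'g \<Rightarrow> 'r" where
  "id_minus_shift m = m - ltrans m x"

lemma id_minus_shift_mem:
  "m \<in> fin_funs {\<beta> \<in> G. r \<beta> = u} \<Longrightarrow> id_minus_shift m \<in> fin_funs {\<beta> \<in> G. r \<beta> = u}"
  unfolding id_minus_shift_def using diff_fin_funs ltrans_x_fin_funs by blast

lemma id_minus_shift_diff: "id_minus_shift (m - m') = id_minus_shift m - id_minus_shift m'"
  unfolding id_minus_shift_def ltrans_diff by simp

lemma id_minus_shift_rconv:
  assumes "m \<in> fin_funs {\<beta> \<in> G. r \<beta> = u}" "a \<in> rcarr A"
  shows "id_minus_shift (rconv m a) = rconv (id_minus_shift m) a"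
  using assms ltrans_x_rconv[OF assms(1)] M.act_diff_left[OF assms(1) ltrans_x_fin_funs]
  unfolding id_minus_shift_def by (simp add: steinberg_algebra_simps)

lemma id_minus_shift_eq_zero:
  fixes c :: "'g \<Rightarrow> 'c::{group_add,linorder}"
  assumes "totally_ordered_group TYPE('c)" "grading T G2 gmul c" "c x \<noteq> 0"
    and "m \<in> fin_funs {\<beta> \<in> G. r \<beta> = u}" "id_minus_shift m = 0"
  shows "m = 0"
  using ltrans_x_fixed_imp_zero[OF assms(1-4)] assms(5) by (simp add: id_minus_shift_def)

lemma unital_rfibre_quotient:
  "M.submodule I \<Longrightarrow> unital_right_module A (M.quotient_module (I :: ('g \<Rightarrow> 'r::field) set))"
  by (rule M.unital_right_module_quotient)
    (use local_unit_rconv in \<open>auto simp: fin_funs_def steinberg_algebra_simps\<close>)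

lemma orbit_self: "u \<in> orbit u"
  unfolding orbit_def using u_unit unit_r unit_space_iff by force

lemma isolate_pointmass:
  fixes n :: "'g \<Rightarrow> 'r::field"
  assumes n: "n \<in> fin_funs (orbit u)" and w: "n w \<noteq> 0"
  shows "\<exists>a\<in>steinberg_carrier T. unit_act a n = pointmass w (n w)"
proof -
  have orbitG: "orbit u \<subseteq> G" using orbit_units unit_space_iff by blast
  have "w \<in> orbit u" "finite (supp n)" "supp n \<subseteq> orbit u" using n w by (auto simp: fin_funs_def supp_def)
  moreover have "closedin T (supp n - {w})"
    using Hausdorff_imp_t1_space[OF Hausdorff] calculation orbitG
    unfolding t1_space_closedin_finite by auto
  ultimately obtain B where B: "compactin T B" "openin T B" "w \<in> B" "B \<subseteq> (G - (supp n - {w})) \<inter> G0"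
    using compact_open_units_nbhd[of w "G - (supp n - {w})"] orbit_units orbitG by blast
  have "unit_act (indicator B) n v = pointmass w (n w) v" for v
    using unit_act_indicator_units[of B "1 :: 'r" n v] B(3,4) by (auto simp: supp_def pointmass_def)
  then have "unit_act (indicator B) n = pointmass w (n w)" ..
  moreover have "(indicator B :: 'g \<Rightarrow> 'r) \<in> steinberg_carrier T"
    using scaled_indicator_steinberg[OF Hausdorff B(1,2), of 1] by simp
  ultimately show ?thesis by blast
qed

lemma transport_pointmass:
  assumes w: "w \<in> orbit u" and v: "v \<in> orbit u" and k': "k' \<noteq> 0"
  shows "\<exists>a\<in>steinberg_carrier T. unit_act a (pointmass w k') = pointmass v (k :: 'r::field)"
proof -
  obtain \<gamma>v \<gamma>w where \<gamma>: "\<gamma>v \<in> G" "d \<gamma>v = u" "r \<gamma>v = v" "\<gamma>w \<in> G" "d \<gamma>w = u" "r \<gamma>w = w"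
    using v w unfolding orbit_def by auto
  then have c: "(\<gamma>v, ginv \<gamma>w) \<in> G2" using composable_iff inv_mem r_inv by auto
  let ?\<gamma> = "gmul \<gamma>v (ginv \<gamma>w)"
  have \<gamma>': "?\<gamma> \<in> G" "d ?\<gamma> = w" "r ?\<gamma> = v" using mul_mem[OF c] d_mul[OF c] r_mul[OF c] d_inv \<gamma> by auto
  obtain B where B: "open_bisection T gmul ginv B" "compactin T B" "?\<gamma> \<in> B"
    using compact_open_bisection_nbhd[of ?\<gamma> G] \<gamma>' by auto
  have BG: "B \<subseteq> G" using openin_subset[OF open_bisection_openin[OF B(1)]] .
  have a: "(\<lambda>x. k / k' * indicator B x) \<in> steinberg_carrier T"
    using scaled_indicator_steinberg[OF Hausdorff B(2) open_bisection_openin[OF B(1)]] .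
  have "unit_act (\<lambda>x. k / k' * indicator B x) (pointmass w k') = pointmass (r ?\<gamma>) (k / k' * k')"
    by (rule unit_act_indicator_bisection[OF open_bisection_inj(1)[OF B(1)] BG B(3) \<gamma>'(2) a])
  moreover have "k / k' * k' = k" using k' by simp
  ultimately show ?thesis using a \<gamma>'(3) by auto
qed

lemma orbit_functions_generated:
  assumes S: "S \<subseteq> fin_funs (orbit u)" "0 \<in> S" "\<forall>k\<in>S. \<forall>k'\<in>S. k + k' \<in> S"
    "\<forall>a\<in>steinberg_carrier T. \<forall>k\<in>S. unit_act a k \<in> S"
    and n: "n \<in> S" "n \<noteq> (0 :: 'g \<Rightarrow> 'r::field)"
  shows "fin_funs (orbit u) \<subseteq> S"
proof
  obtain w where w: "n w \<noteq> 0" using n(2) by (auto simp: fun_eq_iff)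
  have n': "n \<in> fin_funs (orbit u)" using S n by blast
  then have wO: "w \<in> orbit u" using w by (auto simp: fin_funs_def supp_def)
  obtain a where "a \<in> steinberg_carrier T" "unit_act a n = pointmass w (n w)"
    using isolate_pointmass[OF n' w] by blast
  then have "pointmass w (n w) \<in> S" using S(4) n(1) by force
  then have pointmasses: "pointmass v k \<in> S" if "v \<in> orbit u" for v k
    using transport_pointmass[OF wO that w, of k] S(4) by metis
  have "(\<lambda>v. if v \<in> V then k v else 0) \<in> S" if "finite V" "V \<subseteq> orbit u" for V k
    using that
  proof (induction V rule: finite_induct)
    case empty
    show ?case using S(2) by (simp add: zero_fun_def)
  next
    case (insert v V)
    then have "(\<lambda>v. if v \<in> V then k v else 0) + pointmass v (k v) \<in> S"
      using S(3) pointmasses by simp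
    moreover have "(\<lambda>v. if v \<in> V then k v else 0) + pointmass v (k v) =
        (\<lambda>v'. if v' \<in> insert v V then k v' else 0)"
      using insert(2) by (auto simp: fun_eq_iff pointmass_def)
    ultimately show ?case by simp
  qed
  moreover fix k :: "'g \<Rightarrow> 'r" assume "k \<in> fin_funs (orbit u)"
  moreover have "k = (\<lambda>v. if v \<in> supp k then k v else 0)" by (auto simp: supp_def fun_eq_iff)
  ultimately show "k \<in> S" unfolding fin_funs_def by (metis mem_Collect_eq)
qed

lemma simple_orbit_module: "simple_left_module A (N.singleton_module :: (_, 'g \<Rightarrow> 'r::field) lmodule)"
proof (rule N.simple_left_module_singleton)
  show "pointmass u (1 :: 'r) \<in> fin_funs (orbit u)" "pointmass u (1 :: 'r) \<noteq> 0"
    using pointmass_fin_funs orbit_self by (auto simp: pointmass_def fun_eq_iff)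
next
  fix S and n :: "'g \<Rightarrow> 'r"
  assume "S \<subseteq> fin_funs (orbit u)" "0 \<in> S" "\<forall>k\<in>S. \<forall>k'\<in>S. k + k' \<in> S"
    "\<forall>a\<in>rcarr A. \<forall>k\<in>S. unit_act a k \<in> S" "n \<in> S" "n \<noteq> 0"
  then show "fin_funs (orbit u) \<subseteq> S"
    by (intro orbit_functions_generated) (simp_all add: steinberg_algebra_simps)
qed

lemma unital_orbit_module: "unital_left_module A (N.singleton_module :: (_, 'g \<Rightarrow> 'r::field) lmodule)"
proof (rule N.unital_left_module_singleton)
  fix n :: "'g \<Rightarrow> 'r" assume "n \<in> fin_funs (orbit u)"
  then have "finite (supp n)" "supp n \<subseteq> G0" using orbit_units by (auto simp: fin_funs_def)
  then show "\<exists>a\<in>rcarr A. unit_act a n = n" using local_unit_unit_act by (simp add: steinberg_algebra_simps)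
qed

lemma rep_coset_zero:
  "m \<in> fin_funs {\<beta> \<in> G. r \<beta> = u} \<Longrightarrow> M.rep {0} (M.coset {0} m) = m"
  using M.rep_coset[OF M.submodule_zero] by fastforce

lemma pairing_tensor_rels:
  assumes "z \<in> tensor_rels A (M.quotient_module {0}) (N.singleton_module :: (_, 'g \<Rightarrow> 'r::field) lmodule)"
  shows "lin_ext (\<lambda>(X, Y). pairing (M.rep {0} X) (the_elem Y)) z = 0"
  using assms
proof (rule lin_ext_tensor_rels[rotated 3])
  note quotient = M.quotient_simps[OF M.submodule_zero] M.quotient_add_coset[OF M.submodule_zero]
    M.quotient_act_coset[OF M.submodule_zero] rep_coset_zero N.singleton_module_simps
  have fin: "m \<in> fin_funs {\<beta> \<in> G. r \<beta> = u} \<Longrightarrow> finite (supp m) \<and> supp m \<subseteq> G" for m :: "'g \<Rightarrow> 'r"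
    by (auto simp: fin_funs_def)
  fix X X' Y Y' :: "('g \<Rightarrow> 'r) set" and a :: "'g \<Rightarrow> 'r"
  assume "X \<in> gcarr (M.quotient_module {0})" "X' \<in> gcarr (M.quotient_module {0})"
    "Y \<in> gcarr N.singleton_module" "Y' \<in> gcarr N.singleton_module"
  then obtain m m' n n' where mn: "X = M.coset {0} m" "X' = M.coset {0} m'" "Y = {n}" "Y' = {n'}"
    "m \<in> fin_funs {\<beta> \<in> G. r \<beta> = u}" "m' \<in> fin_funs {\<beta> \<in> G. r \<beta> = u}"
    by (auto simp: quotient)
  show "(\<lambda>(X, Y). pairing (M.rep {0} X) (the_elem Y)) (gadd (M.quotient_module {0}) X X', Y) =
      (\<lambda>(X, Y). pairing (M.rep {0} X) (the_elem Y)) (X, Y) +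
      (\<lambda>(X, Y). pairing (M.rep {0} X) (the_elem Y)) (X', Y)"
    using mn fin[of m] fin[of m'] by (simp add: quotient M.add_mem pairing_add_left)
  show "(\<lambda>(X, Y). pairing (M.rep {0} X) (the_elem Y)) (X, gadd N.singleton_module Y Y') =
      (\<lambda>(X, Y). pairing (M.rep {0} X) (the_elem Y)) (X, Y) +
      (\<lambda>(X, Y). pairing (M.rep {0} X) (the_elem Y)) (X, Y')"
    using mn by (simp add: quotient pairing_add_right)
  assume "a \<in> rcarr A"
  then show "(\<lambda>(X, Y). pairing (M.rep {0} X) (the_elem Y)) (ract (M.quotient_module {0}) X a, Y) =
      (\<lambda>(X, Y). pairing (M.rep {0} X) (the_elem Y)) (X, lact N.singleton_module a Y)"
    using mn fin[of m] by (simp add: quotient M.act_mem pairing_balanced steinberg_algebra_simps)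
qed

lemma shift_pointmass: "ltrans (pointmass u 1) x = (pointmass x 1 :: 'g \<Rightarrow> 'r::field)"
proof
  fix \<beta>
  have "gmul (ginv x) \<beta> = u \<longleftrightarrow> \<beta> = x" if "\<beta> \<in> G" "r \<beta> = u"
    using mul_ldiv[of x \<beta>] mul_d_right[of x] that x_mem by (auto simp: gdom_def)
  then show "ltrans (pointmass u 1) x \<beta> = (pointmass x 1 :: 'g \<Rightarrow> 'r) \<beta>"
    using x_mem by (auto simp: ltrans_def pointmass_def)
qed

text \<open>The annihilator is \<open>1\<^sub>V - 1\<^sub>B\<close> for a compact open set of units \<open>V \<ni> u\<close> and a compact open
  bisection \<open>B \<ni> x\<close>: on \<open>r\<^sup>-\<^sup>1(u)\<close> these indicators are the point masses at \<open>u\<close> and \<open>x\<close>, while both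
  act on the point mass at \<open>u\<close> as the identity because \<open>d x = r x = u\<close>.\<close>

lemma annihilator_pointmass:
  "\<exists>a\<in>steinberg_carrier T. rconv (pointmass u 1) a = id_minus_shift (pointmass u 1) \<and>
     unit_act a (pointmass u 1) = (0 :: 'g \<Rightarrow> 'r::field)"
proof -
  obtain V where V: "compactin T V" "openin T V" "u \<in> V" "V \<subseteq> G0"
    using compact_open_units_nbhd[OF u_unit, of G] u_unit unit_space_iff by auto
  obtain B where B: "open_bisection T gmul ginv B" "compactin T B" "x \<in> B"
    using compact_open_bisection_nbhd[of x G] x_mem by auto
  have BG: "B \<subseteq> G" using openin_subset[OF open_bisection_openin[OF B(1)]] .
  let ?V = "\<lambda>\<gamma>. (1 :: 'r) * indicator V \<gamma>" and ?B = "\<lambda>\<gamma>. (-1 :: 'r) * indicator B \<gamma>"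
  have carrier: "?V \<in> steinberg_carrier T" "?B \<in> steinberg_carrier T"
    using scaled_indicator_steinberg[OF Hausdorff V(1,2)]
      scaled_indicator_steinberg[OF Hausdorff B(2) open_bisection_openin[OF B(1)]] by blast+
  let ?a = "\<lambda>\<gamma>. ?V \<gamma> + ?B \<gamma>"
  have "?a \<beta> = pointmass u 1 \<beta> - pointmass x 1 \<beta>" if \<beta>: "\<beta> \<in> G" "r \<beta> = u" for \<beta>
  proof -
    have "\<beta> \<in> V \<longleftrightarrow> \<beta> = u" using V(3,4) unit_r[of \<beta>] \<beta>(2) by auto
    moreover have "\<beta> \<in> B \<Longrightarrow> \<beta> = x"
      using inj_onD[OF open_bisection_inj(2)[OF B(1)], of \<beta> x] B(3) \<beta>(2) x_mem(3) by simp
    then have "\<beta> \<in> B \<longleftrightarrow> \<beta> = x" using B(3) by blast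
    ultimately show ?thesis by (simp add: pointmass_def indicator_def)
  qed
  then have "rconv (pointmass u 1) ?a = pointmass u 1 - pointmass x 1"
    unfolding rconv_pointmass_unit[OF u_unit] using x_mem u_unit unit_r unit_space_iff
    by (auto simp: fun_eq_iff pointmass_def)
  moreover have "unit_act ?a (pointmass u 1) = 0"
  proof -
    have "unit_act ?V (pointmass u 1) w = pointmass u 1 w" for w
      using unit_act_indicator_units[OF V(4), of 1 "pointmass u 1" w] V(3)
      by (cases "w \<in> V") (auto simp: pointmass_def)
    then have "unit_act ?V (pointmass u 1) = pointmass u 1" by (rule ext)
    moreover have "unit_act ?B (pointmass u 1) = pointmass u (-1)"
      using unit_act_indicator_bisection[OF open_bisection_inj(1)[OF B(1)] BG B(3) x_mem(2) carrier(2)]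
        x_mem(3) by simp
    ultimately show ?thesis
      using unit_act_add_left[OF carrier] by (simp add: fun_eq_iff pointmass_def)
  qed
  ultimately show ?thesis
    unfolding id_minus_shift_def shift_pointmass using steinberg_carrier_add[OF carrier] by blast
qed

lemma not_flat:
  fixes c :: "'g \<Rightarrow> 'c::{group_add,linorder}"
  assumes "totally_ordered_group TYPE('c)" "grading T G2 gmul c" "c x \<noteq> 0"
  shows "\<not> flat_left_module A (N.singleton_module :: (_, 'g \<Rightarrow> 'r::field) lmodule) TYPE(('g \<Rightarrow> 'r) set)"
proof
  let ?M = "M.quotient_module {0 :: 'g \<Rightarrow> 'r}" and ?N = "N.singleton_module :: (_, 'g \<Rightarrow> 'r) lmodule"
  let ?I = "id_minus_shift ` fin_funs {\<beta> \<in> G. r \<beta> = u} :: ('g \<Rightarrow> 'r) set"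
  let ?f = "M.induced id_minus_shift {0} {0}"
  let ?M' = "M.quotient_module ?I" and ?g = "M.induced id {0} ?I"
  assume flat: "flat_left_module A ?N TYPE(('g \<Rightarrow> 'r) set)"
  have I: "M.submodule ?I"
    by (rule M.submodule_image[OF id_minus_shift_mem id_minus_shift_diff id_minus_shift_rconv])
  have "unital_right_module A ?M \<and> unital_right_module A ?M \<and> unital_right_module A ?M' \<and>
      right_hom A ?M ?M ?f \<and> right_hom A ?M ?M' ?g \<and> inj_on ?f (gcarr ?M) \<and>
      ?g ` gcarr ?M = gcarr ?M' \<and> {X \<in> gcarr ?M. ?g X = gzero ?M'} = ?f ` gcarr ?M"
    by (intro conjI unital_rfibre_quotient M.submodule_zero I
        M.cokernel_short_exact[OF id_minus_shift_mem id_minus_shift_diff id_minus_shift_rconv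
          id_minus_shift_eq_zero[OF assms]])
  note injective = flat[unfolded flat_left_module_def, rule_format, OF this, THEN conjunct1]
  let ?\<delta> = "pointmass u (1 :: 'r)"
  have "u \<in> {\<beta> \<in> G. r \<beta> = u}" using u_unit unit_r unit_space_iff by auto
  then have \<delta>M: "?\<delta> \<in> fin_funs {\<beta> \<in> G. r \<beta> = u}" by (rule pointmass_fin_funs)
  have \<delta>N: "?\<delta> \<in> fin_funs (orbit u)" by (rule pointmass_fin_funs[OF orbit_self])
  let ?X = "M.coset {0} ?\<delta>" and ?Y = "{?\<delta>}"
  have XY: "?X \<in> gcarr ?M" "?Y \<in> gcarr ?N"
    unfolding M.quotient_simps[OF M.submodule_zero] N.singleton_module_simps
    using \<delta>M \<delta>N by blast+
  obtain a where a: "a \<in> steinberg_carrier T" "rconv ?\<delta> a = id_minus_shift ?\<delta>" "unit_act a ?\<delta> = 0"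
    using annihilator_pointmass by blast
  have "ract ?M ?X a = M.coset {0} (rconv ?\<delta> a)"
    using a(1) by (intro M.quotient_act_coset[OF M.submodule_zero \<delta>M]) (simp add: steinberg_algebra_simps)
  also have "\<dots> = ?f ?X"
    unfolding a(2)
    by (intro M.induced_coset[symmetric, OF M.submodule_zero M.submodule_zero id_minus_shift_mem
        id_minus_shift_diff id_minus_shift_rconv _ \<delta>M])
      (auto simp: id_minus_shift_def ltrans_def fun_eq_iff)
  finally have "ract ?M ?X a = ?f ?X" .
  moreover have "delta (ract ?M ?X a, ?Y) \<in> tensor_rels A ?M ?N"
    using a XY N.left_module_singleton
    by (intro delta_in_tensor_rels) (simp_all add: steinberg_algebra_simps N.singleton_module_simps)
  moreover have "delta (?X, ?Y) \<in> free_on (gcarr ?M \<times> gcarr ?N)"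
    using supp_delta[of "(?X, ?Y)"] XY unfolding free_on_def supp_def by simp
  ultimately have "delta (?X, ?Y) \<in> tensor_rels A ?M ?N"
    using injective by (simp add: tens_map_delta)
  then have "lin_ext (\<lambda>(X, Y). pairing (M.rep {0} X) (the_elem Y)) (delta (?X, ?Y)) = 0"
    by (rule pairing_tensor_rels)
  moreover have "pairing ?\<delta> ?\<delta> = 1"
    using u_unit unit_space_iff by (simp add: pairing_def pointmass_def supp_def)
  ultimately show False using rep_coset_zero[OF \<delta>M] by (simp add: lin_ext_delta)
qed

end

theorem proposition3p3:
  fixes T :: "'g topology"
    and G2 :: "('g \<times> 'g) set"
    and gmul :: "'g \<Rightarrow> 'g \<Rightarrow> 'g"
    and ginv :: "'g \<Rightarrow> 'g"
    and c :: "'g \<Rightarrow> 'c::{group_add,linorder}"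
  assumes "totally_ordered_group TYPE('c)"
    and "ample_groupoid T G2 gmul ginv"
    and "Hausdorff_space T"
    and "grading T G2 gmul c"
    and "left_SF_ring (steinberg_algebra T G2 gmul :: ('g \<Rightarrow> 'r::field) rng)
           TYPE(('g \<Rightarrow> 'r) set) TYPE(('g \<Rightarrow> 'r) set)"
  shows "\<forall>u\<in>unit_space T gmul ginv. \<forall>x\<in>isotropy T gmul ginv u. c x = 0"
proof (intro ballI)
  fix u x assume "x \<in> isotropy T gmul ginv u"
  moreover have "groupoid T G2 gmul ginv"
    using assms(2) unfolding ample_groupoid_def etale_groupoid_def topological_groupoid_def by blast
  ultimately interpret isotropy_arrow T G2 gmul ginv u x
    using assms(2,3) by unfold_locales
  show "c x = 0"
  proof (rule ccontr)
    assume "c x \<noteq> 0"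
    then have "\<not> flat_left_module A (N.singleton_module :: (_, 'g \<Rightarrow> 'r) lmodule) TYPE(('g \<Rightarrow> 'r) set)"
      using not_flat assms(1,4) by blast
    then show False
      using assms(5) simple_orbit_module unital_orbit_module unfolding left_SF_ring_def by blast
  qed
qed

end
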